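(* There is an isomorphism of bigraded superrings \[ R^{S_n}\cong \mathbb{Z}[x_1,\dots,x_n]^{S_n}\otimes \textstyle\bigwedge^\bullet(\mathcal{S}_{0,1},\dots,\mathcal{S}_{0,n}). \]
   Context: $R=\mathbb{Z}[x_1,\dots,x_n]\otimes\bigwedge^\bullet(\omega_1,\dots,\omega_n)$ is supercommutative and bigraded ($x_i$ even, degree $(2,0)$; $\omega_i$ odd, degree $(-2i,2)$). $S_n$ acts by $s_i(x_j)=x_{s_i(j)}$, $s_i(\omega_j)=\omega_j+\delta_{ij}(x_i-x_{i+1})\omega_{i+1}$; $R^{S_n}$ is the invariant subring. With Demazure operators $\partial_i(f)=(f-s_i(f))/(x_i-x_{i+1})$, $\partial_{\vartheta_0}$ the composite along a reduced expression of the longest element $\vartheta_0$, set $\mathcal{S}_{0,i}=\partial_{\vartheta_0}(x_1^{n-1}x_2^{n-2}\cdots x_{n-1}\omega_i)\in R^{S_n}$ (odd elements). *)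

theory Defs
  imports Main "HOL-Library.Poly_Mapping"
begin

text \<open>An element of R is a finitely supported Z-linear combination of basis
  monomials (alpha, S): alpha is the exponent vector of x^alpha, and S is a finite
  set of indices standing for omega_S = omega_(s1) ... omega_(sk) with s1 < ... < sk.\<close>

type_synonym mon = "(nat \<Rightarrow>\<^sub>0 nat) \<times> nat set"
type_synonym R = "mon \<Rightarrow>\<^sub>0 int"

text \<open>Sign of omega_S * omega_T = sgnpair S T * omega_(S Un T) for disjoint S, T.\<close>
definition sgnpair :: "nat set \<Rightarrow> nat set \<Rightarrow> int" where
  "sgnpair S T = (-1) ^ card {(s, t). s \<in> S \<and> t \<in> T \<and> t < s}"

definition mulR :: "R \<Rightarrow> R \<Rightarrow> R" where
  "mulR f g = (\<Sum>(a, b) \<in> Poly_Mapping.keys f \<times> Poly_Mapping.keys g.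
      if snd a \<inter> snd b = {}
      then Poly_Mapping.single (fst a + fst b, snd a \<union> snd b)
             (sgnpair (snd a) (snd b) * Poly_Mapping.lookup f a * Poly_Mapping.lookup g b)
      else 0)"

definition oneR :: R where
  "oneR = Poly_Mapping.single (0, {}) 1"

definition xv :: "nat \<Rightarrow> R" where
  "xv i = Poly_Mapping.single (Poly_Mapping.single i 1, {}) 1"

definition omv :: "nat \<Rightarrow> R" where
  "omv i = Poly_Mapping.single (0, {i}) 1"

definition Rn :: "nat \<Rightarrow> R set" where
  "Rn n = {f. \<forall>k \<in> Poly_Mapping.keys f. Poly_Mapping.keys (fst k) \<subseteq> {1..n} \<and> snd k \<subseteq> {1..n}}"

definition swap_exp :: "nat \<Rightarrow> (nat \<Rightarrow>\<^sub>0 nat) \<Rightarrow> (nat \<Rightarrow>\<^sub>0 nat)" where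
  "swap_exp i \<alpha> = Abs_poly_mapping (\<lambda>j. Poly_Mapping.lookup \<alpha> (if j = i then i + 1 else if j = i + 1 then i else j))"

definition om_img :: "nat \<Rightarrow> nat \<Rightarrow> R" where
  "om_img i j = (if j = i then omv j + mulR (xv i - xv (i + 1)) (omv (i + 1)) else omv j)"

definition act :: "nat \<Rightarrow> R \<Rightarrow> R" where
  "act i f = (\<Sum>k \<in> Poly_Mapping.keys f.
      mulR (Poly_Mapping.single (swap_exp i (fst k), {}) (Poly_Mapping.lookup f k))
           (foldr mulR (map (om_img i) (sorted_list_of_set (snd k))) oneR))"

text \<open>R^{S_n}: invariants under all simple transpositions s_1..s_(n-1),
  which generate S_n.\<close>
definition Rinv :: "nat \<Rightarrow> R set" where
  "Rinv n = {f \<in> Rn n. \<forall>i \<in> {1..<n}. act i f = f}"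

definition demazure :: "nat \<Rightarrow> R \<Rightarrow> R" where
  "demazure i f = (THE g. mulR (xv i - xv (i + 1)) g = f - act i f)"

text \<open>Reduced word of the longest element: s_1 (s_2 s_1) (s_3 s_2 s_1) ... (s_(n-1) ... s_1).\<close>
definition w0word :: "nat \<Rightarrow> nat list" where
  "w0word n = concat (map (\<lambda>k. rev [1..<k + 1]) [1..<n])"

definition demazure_w0 :: "nat \<Rightarrow> R \<Rightarrow> R" where
  "demazure_w0 n f = foldr demazure (w0word n) f"

definition rho_exp :: "nat \<Rightarrow> (nat \<Rightarrow>\<^sub>0 nat)" where
  "rho_exp n = (\<Sum>j \<in> {1..<n}. Poly_Mapping.single j (n - j))"

definition S0 :: "nat \<Rightarrow> nat \<Rightarrow> R" where
  "S0 n i = demazure_w0 n (Poly_Mapping.single (rho_exp n, {i}) 1)"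

definition S0set :: "nat \<Rightarrow> nat set \<Rightarrow> R" where
  "S0set n I = foldr mulR (map (S0 n) (sorted_list_of_set I)) oneR"

definition bideg :: "mon \<Rightarrow> int \<times> int" where
  "bideg k = (2 * int (sum (Poly_Mapping.lookup (fst k)) (Poly_Mapping.keys (fst k))) - 2 * int (\<Sum>(snd k)),
              2 * int (card (snd k)))"

definition homR :: "int \<times> int \<Rightarrow> R \<Rightarrow> bool" where
  "homR d f \<longleftrightarrow> (\<forall>k \<in> Poly_Mapping.keys f. bideg k = d)"

definition symP :: "nat \<Rightarrow> R set" where
  "symP n = {p \<in> Rinv n. \<forall>k \<in> Poly_Mapping.keys p. snd k = {}}"

text \<open>An element of the tensor product is represented by its coefficients:
  c I is the coefficient (a symmetric polynomial) of xi_I, for I a subset of {1..n}.\<close>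
definition Tcar :: "nat \<Rightarrow> (nat set \<Rightarrow> R) set" where
  "Tcar n = {c. (\<forall>I. I \<subseteq> {1..n} \<longrightarrow> c I \<in> symP n) \<and> (\<forall>I. \<not> I \<subseteq> {1..n} \<longrightarrow> c I = 0)}"

definition tmul :: "nat \<Rightarrow> (nat set \<Rightarrow> R) \<Rightarrow> (nat set \<Rightarrow> R) \<Rightarrow> (nat set \<Rightarrow> R)" where
  "tmul n c d = (\<lambda>K. \<Sum>(I, J) \<in> {(I, J). I \<subseteq> {1..n} \<and> J \<subseteq> {1..n} \<and> I \<inter> J = {} \<and> I \<union> J = K}.
        mulR (Poly_Mapping.single (0, {}) (sgnpair I J)) (mulR (c I) (d J)))"

definition tone :: "nat set \<Rightarrow> R" where
  "tone = (\<lambda>I. if I = {} then oneR else 0)"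

text \<open>xi_i has the bidegree (-2i,2) of S_(0,i); p xi_I has degree deg p + deg xi_I.\<close>
definition homT :: "int \<times> int \<Rightarrow> (nat set \<Rightarrow> R) \<Rightarrow> bool" where
  "homT d c \<longleftrightarrow> (\<forall>I. \<forall>k \<in> Poly_Mapping.keys (c I). bideg (fst k, I) = d)"

definition Phi :: "nat \<Rightarrow> (nat set \<Rightarrow> R) \<Rightarrow> R" where
  "Phi n c = (\<Sum>I \<in> Pow {1..n}. mulR (c I) (S0set n I))"

end

theory Submission
  imports Defs
begin

text \<open>
  Pushing x^rho omega_i through the Demazure operators of a reduced word for the longest element
  gives S_(0,i) explicitly as the sum over i \<le> j \<le> n of (-1)^(j-i) h_(j-i)(x_j, ..., x_n) omega_j,
  with h_k the complete homogeneous symmetric polynomial. So S_(0,i) is omega_i plus terms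
  omega_j with j > i, and, ordering the basis omega_I of R over Z[x] by the sum of the indices,
  the products S_(0,I) are unitriangular. This gives their linear independence, and solving for
  omega_i by descending induction on i shows that they span R over Z[x]. As the S_(0,i) are
  invariant and the s_k act on Z[x] by ring automorphisms, the sum of the c_I S_(0,I) is invariant
  exactly when all c_I are symmetric. The S_(0,i) are odd, hence anticommute, which makes the map
  multiplicative; it respects bidegrees because S_(0,i) has the bidegree of omega_i.
\<close>

lemma frag_cmul_single: "frag_cmul c (Poly_Mapping.single k d) = Poly_Mapping.single k (c * d)"
  by (rule poly_mapping_eqI) (simp add: lookup_single when_def)

lemma frag_cmul_diff_distrib2: "frag_cmul k (a - b) = frag_cmul k a - frag_cmul k b"
  by (rule poly_mapping_eqI) (simp add: lookup_minus right_diff_distrib)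

lemma frag_extend_fun_add: "frag_extend (\<lambda>i. f i + g i) c = frag_extend f c + frag_extend g c"
  by (simp add: frag_extend_def frag_cmul_distrib2 sum.distrib)

lemma frag_extend_fun_diff: "frag_extend (\<lambda>i. f i - g i) c = frag_extend f c - frag_extend g c"
  by (simp add: frag_extend_def frag_cmul_diff_distrib2 sum_subtractf)

lemma frag_extend_fun_cmul: "frag_extend (\<lambda>i. frag_cmul k (f i)) c = frag_cmul k (frag_extend f c)"
  by (simp add: frag_extend_def frag_cmul_sum mult.commute)

lemma frag_extend_fun_0: "frag_extend (\<lambda>i. 0) c = 0"
  by (simp add: frag_extend_def)

lemma keys_add_nat: "Poly_Mapping.keys (\<alpha> + \<beta> :: nat \<Rightarrow>\<^sub>0 nat) = Poly_Mapping.keys \<alpha> \<union> Poly_Mapping.keys \<beta>"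
  by (auto simp: in_keys_iff lookup_add)

lemma sum_eq_single:
  assumes "finite X" "x0 \<in> X" "\<And>x. x \<in> X \<Longrightarrow> x \<noteq> x0 \<Longrightarrow> F x = 0"
  shows "sum F X = F x0"
proof -
  have "sum F X = F x0 + sum F (X - {x0})" using assms by (simp add: sum.remove)
  also have "sum F (X - {x0}) = 0" using assms by (intro sum.neutral) auto
  finally show ?thesis by simp
qed

lemma sum_Pow_pairs_by_union:
  fixes G :: "'a set \<Rightarrow> 'a set \<Rightarrow> 'b::comm_monoid_add"
  assumes "finite X"
  shows "(\<Sum>K\<in>Pow X. \<Sum>(I, J)\<in>{(I, J). I \<subseteq> X \<and> J \<subseteq> X \<and> I \<inter> J = {} \<and> I \<union> J = K}. G I J)
       = (\<Sum>(I, J)\<in>Pow X \<times> Pow X. if I \<inter> J = {} then G I J else 0)"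
proof -
  let ?S = "{(I, J). I \<subseteq> X \<and> J \<subseteq> X \<and> I \<inter> J = {}}"
  have "?S \<subseteq> Pow X \<times> Pow X" by blast
  then have fin: "finite ?S" by (rule finite_subset) (simp add: assms)
  have "(\<Sum>(I, J)\<in>Pow X \<times> Pow X. if I \<inter> J = {} then G I J else 0) = (\<Sum>(I, J)\<in>?S. G I J)"
    using assms by (intro sum.mono_neutral_cong_right) (auto split: if_splits)
  also have "\<dots> = (\<Sum>K\<in>Pow X. \<Sum>x\<in>{x \<in> ?S. fst x \<union> snd x = K}. case_prod G x)"
    using fin assms by (intro sum.group[symmetric]) auto
  also have "\<dots> = (\<Sum>K\<in>Pow X. \<Sum>(I, J)\<in>{(I, J). I \<subseteq> X \<and> J \<subseteq> X \<and> I \<inter> J = {} \<and> I \<union> J = K}. G I J)"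
    by (intro sum.cong refl arg_cong[where f = "sum _"]) auto
  finally show ?thesis ..
qed

lemma finite_Pow_atLeastAtMost: "finite (Pow {1..(n::nat)})" by simp

definition monmul :: "mon \<Rightarrow> mon \<Rightarrow> R" where
  "monmul a b = (if snd a \<inter> snd b = {}
     then frag_cmul (sgnpair (snd a) (snd b)) (frag_of (fst a + fst b, snd a \<union> snd b)) else 0)"

lemma mulR_frag_extend: "mulR f g = frag_extend (\<lambda>a. frag_extend (monmul a) g) f"
proof -
  have "mulR f g = (\<Sum>a\<in>Poly_Mapping.keys f. \<Sum>b\<in>Poly_Mapping.keys g.
      frag_cmul (Poly_Mapping.lookup f a) (frag_cmul (Poly_Mapping.lookup g b) (monmul a b)))"
    unfolding mulR_def sum.cartesian_product[symmetric]
    by (intro sum.cong refl) (auto simp: monmul_def frag_cmul_single mult_ac)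
  then show ?thesis
    by (simp add: frag_extend_def frag_cmul_sum)
qed

lemma mulR_add_left: "mulR (f + g) h = mulR f h + mulR g h"
  by (simp add: mulR_frag_extend frag_extend_add)

lemma mulR_add_right: "mulR h (f + g) = mulR h f + mulR h g"
  by (simp add: mulR_frag_extend frag_extend_add frag_extend_fun_add)

lemma mulR_diff_left: "mulR (f - g) h = mulR f h - mulR g h"
  by (simp add: mulR_frag_extend frag_extend_diff)

lemma mulR_diff_right: "mulR h (f - g) = mulR h f - mulR h g"
  by (simp add: mulR_frag_extend frag_extend_diff frag_extend_fun_diff)

lemma mulR_zero_left[simp]: "mulR 0 h = 0"
  by (simp add: mulR_frag_extend)

lemma mulR_zero_right[simp]: "mulR h 0 = 0"
  by (simp add: mulR_frag_extend frag_extend_fun_0)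

lemma mulR_minus_left: "mulR (- f) h = - mulR f h"
  by (simp add: mulR_frag_extend frag_extend_minus)

lemma mulR_cmul_left: "mulR (frag_cmul k f) h = frag_cmul k (mulR f h)"
  by (simp add: mulR_frag_extend frag_extend_cmul)

lemma mulR_cmul_right: "mulR h (frag_cmul k f) = frag_cmul k (mulR h f)"
  by (simp add: mulR_frag_extend frag_extend_cmul frag_extend_fun_cmul)

lemma mulR_sum_left: "finite A \<Longrightarrow> mulR (\<Sum>i\<in>A. f i) h = (\<Sum>i\<in>A. mulR (f i) h)"
  by (induction A rule: finite_induct) (simp_all add: mulR_add_left)

lemma mulR_sum_right: "finite A \<Longrightarrow> mulR h (\<Sum>i\<in>A. f i) = (\<Sum>i\<in>A. mulR h (f i))"
  by (induction A rule: finite_induct) (simp_all add: mulR_add_right)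

lemma mulR_frag_of: "mulR (frag_of a) (frag_of b) = monmul a b"
  by (simp add: mulR_frag_extend)

definition inversions :: "nat set \<Rightarrow> nat set \<Rightarrow> (nat \<times> nat) set" where
  "inversions S T = {(s, t). s \<in> S \<and> t \<in> T \<and> t < s}"

lemma sgnpair_inversions: "sgnpair S T = (-1) ^ card (inversions S T)"
  by (simp add: sgnpair_def inversions_def)

lemma finite_inversions:
  assumes "finite S"
  shows "finite (inversions S T)"
proof (rule finite_subset)
  show "inversions S T \<subseteq> S \<times> {..<Max S}"
    using assms by (auto simp: inversions_def intro: less_le_trans[OF _ Max_ge])
qed (use assms in simp)

lemma sgnpair_Un_left:
  assumes "finite A" "finite B" "A \<inter> B = {}"
  shows "sgnpair (A \<union> B) C = sgnpair A C * sgnpair B C"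
proof -
  have "inversions (A \<union> B) C = inversions A C \<union> inversions B C"
    "inversions A C \<inter> inversions B C = {}"
    using assms(3) by (auto simp: inversions_def)
  then show ?thesis
    using assms(1,2) by (simp add: sgnpair_inversions card_Un_disjoint finite_inversions power_add)
qed

lemma sgnpair_Un_right:
  assumes "finite A" "B \<inter> C = {}"
  shows "sgnpair A (B \<union> C) = sgnpair A B * sgnpair A C"
proof -
  have "inversions A (B \<union> C) = inversions A B \<union> inversions A C"
    "inversions A B \<inter> inversions A C = {}"
    using assms(2) by (auto simp: inversions_def)
  then show ?thesis
    using assms(1) by (simp add: sgnpair_inversions card_Un_disjoint finite_inversions power_add)
qed

lemma sgnpair_empty[simp]: "sgnpair {} T = 1" "sgnpair T {} = 1"
  by (simp_all add: sgnpair_def)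

lemma sgnpair_singletons: "sgnpair {i} {j} = (if j < i then -1 else 1)"
proof -
  have "inversions {i} {j} = (if j < i then {(i, j)} else {})" by (auto simp: inversions_def)
  then show ?thesis by (simp add: sgnpair_inversions)
qed

lemma sgnpair_singleton_left: "sgnpair {b} T = (-1) ^ card {t\<in>T. t < b}"
proof -
  have "inversions {b} T = Pair b ` {t\<in>T. t < b}" by (auto simp: inversions_def)
  then show ?thesis by (simp add: sgnpair_inversions card_image inj_on_def)
qed

lemma sgnpair_cases: "sgnpair A B = 1 \<or> sgnpair A B = -1"
  unfolding sgnpair_inversions by (cases "even (card (inversions A B))") auto

section \<open>Supercommutativity\<close>

text \<open>Since the cardinality of an infinite set is 0, sgnpair is meaningless on infinite index
  sets; associativity therefore needs every monomial to carry only finitely many omega's.\<close>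

definition omega_finite :: "R \<Rightarrow> bool" where
  "omega_finite f \<longleftrightarrow> Poly_Mapping.keys f \<subseteq> {k. finite (snd k)}"

definition omega_free :: "R \<Rightarrow> bool" where
  "omega_free f \<longleftrightarrow> Poly_Mapping.keys f \<subseteq> {k. snd k = {}}"

definition omega_linear :: "R \<Rightarrow> bool" where
  "omega_linear f \<longleftrightarrow> Poly_Mapping.keys f \<subseteq> {k. card (snd k) = 1}"

lemma keys_mulR:
  assumes "k \<in> Poly_Mapping.keys (mulR f g)"
  shows "\<exists>a\<in>Poly_Mapping.keys f. \<exists>b\<in>Poly_Mapping.keys g.
           snd a \<inter> snd b = {} \<and> k = (fst a + fst b, snd a \<union> snd b)"
proof -
  have "k \<in> Poly_Mapping.keys (frag_extend (\<lambda>a. frag_extend (monmul a) g) f)"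
    using assms by (simp add: mulR_frag_extend)
  then have "k \<in> (\<Union>a\<in>Poly_Mapping.keys f. Poly_Mapping.keys (frag_extend (monmul a) g))"
    by (rule subsetD[OF keys_frag_extend])
  then obtain a where a: "a \<in> Poly_Mapping.keys f" "k \<in> Poly_Mapping.keys (frag_extend (monmul a) g)"
    by (rule UN_E)
  from a(2) have "k \<in> (\<Union>b\<in>Poly_Mapping.keys g. Poly_Mapping.keys (monmul a b))"
    by (rule subsetD[OF keys_frag_extend])
  then obtain b where "b \<in> Poly_Mapping.keys g" "k \<in> Poly_Mapping.keys (monmul a b)"
    by (rule UN_E)
  then show ?thesis
    using a(1) by (cases "snd a \<inter> snd b = {}") (auto simp: monmul_def dest: subsetD[OF keys_cmul])
qed

lemma omega_finite_mulR: "omega_finite f \<Longrightarrow> omega_finite g \<Longrightarrow> omega_finite (mulR f g)"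
  unfolding omega_finite_def by (fastforce dest: keys_mulR)

lemma omega_free_mulR: "omega_free f \<Longrightarrow> omega_free g \<Longrightarrow> omega_free (mulR f g)"
  unfolding omega_free_def by (fastforce dest: keys_mulR)

lemma omega_linear_mulR: "omega_free f \<Longrightarrow> omega_linear g \<Longrightarrow> omega_linear (mulR f g)"
  unfolding omega_free_def omega_linear_def by (fastforce dest: keys_mulR)

lemma omega_finite_0[simp]: "omega_finite 0"
  by (simp add: omega_finite_def)

lemma omega_linear_0[simp]: "omega_linear 0"
  by (simp add: omega_linear_def)

lemma omega_free_0[simp]: "omega_free 0"
  by (simp add: omega_free_def)

lemma omega_finite_oneR[simp]: "omega_finite oneR"
  by (simp add: omega_finite_def oneR_def)

lemma omega_finite_omega_linear: "omega_linear f \<Longrightarrow> omega_finite f"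
  unfolding omega_finite_def omega_linear_def using card.infinite by fastforce

lemma omega_finite_omega_free: "omega_free f \<Longrightarrow> omega_finite f"
  unfolding omega_finite_def omega_free_def by auto

lemma omega_finite_add: "omega_finite f \<Longrightarrow> omega_finite g \<Longrightarrow> omega_finite (f + g)"
  unfolding omega_finite_def using keys_add[of f g] by blast

lemma omega_finite_sum: "(\<And>i. i \<in> A \<Longrightarrow> omega_finite (f i)) \<Longrightarrow> omega_finite (\<Sum>i\<in>A. f i)"
  by (induction A rule: infinite_finite_induct) (auto intro: omega_finite_add)

lemma omega_linear_add: "omega_linear f \<Longrightarrow> omega_linear g \<Longrightarrow> omega_linear (f + g)"
  unfolding omega_linear_def using keys_add[of f g] by blast

lemma omega_linear_sum: "(\<And>i. i \<in> A \<Longrightarrow> omega_linear (f i)) \<Longrightarrow> omega_linear (\<Sum>i\<in>A. f i)"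
  by (induction A rule: infinite_finite_induct) (auto intro: omega_linear_add)

lemma omega_free_add: "omega_free f \<Longrightarrow> omega_free g \<Longrightarrow> omega_free (f + g)"
  unfolding omega_free_def using keys_add[of f g] by blast

lemma omega_free_diff: "omega_free f \<Longrightarrow> omega_free g \<Longrightarrow> omega_free (f - g)"
  unfolding omega_free_def using keys_diff[of f g] by blast

lemma omega_free_cmul: "omega_free f \<Longrightarrow> omega_free (frag_cmul k f)"
  unfolding omega_free_def using keys_cmul[of k f] by blast

lemma omega_linear_omv: "omega_linear (omv i)" by (simp add: omega_linear_def omv_def)

lemma omega_finite_omv: "omega_finite (omv j)" by (rule omega_finite_omega_linear[OF omega_linear_omv])

lemma monmul_assoc:
  assumes "finite (snd a)" "finite (snd b)" "finite (snd c)"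
  shows "mulR (monmul a b) (frag_of c) = mulR (frag_of a) (monmul b c)"
proof (cases "snd a \<inter> snd b = {} \<and> snd b \<inter> snd c = {} \<and> snd a \<inter> snd c = {}")
  case True
  then show ?thesis using assms
    by (simp add: monmul_def mulR_cmul_left mulR_cmul_right mulR_frag_of Int_Un_distrib Int_Un_distrib2
        sgnpair_Un_left sgnpair_Un_right add.assoc Un_assoc mult_ac)
next
  case False
  then show ?thesis using assms
    by (auto simp: monmul_def mulR_cmul_left mulR_cmul_right mulR_frag_of Int_Un_distrib Int_Un_distrib2)
qed

lemma mulR_assoc:
  assumes "omega_finite f" "omega_finite g" "omega_finite h"
  shows "mulR (mulR f g) h = mulR f (mulR g h)"
  using assms(1) unfolding omega_finite_def
proof (induction f rule: frag_induction)
  case (one x)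
  then have x: "finite (snd x)" by simp
  show ?case using assms(2) unfolding omega_finite_def
  proof (induction g rule: frag_induction)
    case (one y)
    then have y: "finite (snd y)" by simp
    show ?case using assms(3) unfolding omega_finite_def
    proof (induction h rule: frag_induction)
      case (one z)
      then show ?case using x y by (simp add: mulR_frag_of monmul_assoc)
    qed (simp_all add: mulR_diff_right)
  qed (simp_all add: mulR_diff_left mulR_diff_right)
qed (simp_all add: mulR_diff_left)

lemma oneR_left[simp]: "mulR oneR f = f"
proof -
  have "mulR (frag_of (0, {})) f = f"
    by (induction f rule: frag_induction[OF subset_UNIV])
      (simp_all add: mulR_frag_of monmul_def mulR_diff_right)
  then show ?thesis by (simp add: oneR_def)
qed

lemma oneR_right[simp]: "mulR f oneR = f"
proof -
  have "mulR f (frag_of (0, {})) = f"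
    by (induction f rule: frag_induction[OF subset_UNIV])
      (simp_all add: mulR_frag_of monmul_def mulR_diff_left)
  then show ?thesis by (simp add: oneR_def)
qed

lemma mulR_single_scalar: "mulR (Poly_Mapping.single (0, {}) s) X = frag_cmul s X"
proof -
  have "Poly_Mapping.single (0, {}) s = frag_cmul s oneR" by (simp add: oneR_def frag_cmul_single)
  then show ?thesis by (simp add: mulR_cmul_left)
qed

lemma mulR_commute_omega_free:
  assumes "omega_free e"
  shows "mulR e f = mulR f e"
  using assms unfolding omega_free_def
proof (induction e rule: frag_induction)
  case (one x)
  show ?case
    by (induction f rule: frag_induction[OF subset_UNIV])
      (use one in \<open>simp_all add: mulR_frag_of monmul_def add.commute mulR_diff_left mulR_diff_right\<close>)
qed (simp_all add: mulR_diff_left mulR_diff_right)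

lemma mulR_left_commute_omega_free:
  assumes "omega_free e" "omega_finite x" "omega_finite y"
  shows "mulR x (mulR e y) = mulR e (mulR x y)"
proof -
  have "mulR x (mulR e y) = mulR (mulR x e) y"
    using assms by (simp add: mulR_assoc omega_finite_omega_free)
  also have "mulR x e = mulR e x" using mulR_commute_omega_free[OF assms(1)] by simp
  finally show ?thesis using assms by (simp add: mulR_assoc omega_finite_omega_free)
qed

lemma mulR_anticommute_omega_linear:
  assumes "omega_linear f" "omega_linear g"
  shows "mulR f g = - mulR g f"
  using assms(1) unfolding omega_linear_def
proof (induction f rule: frag_induction)
  case (one x)
  then obtain i where i: "snd x = {i}" by (auto simp: card_Suc_eq)
  show ?case using assms(2) unfolding omega_linear_def
  proof (induction g rule: frag_induction)
    case (one y)
    then obtain j where j: "snd y = {j}" by (auto simp: card_Suc_eq)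
    show ?case
      by (auto simp: mulR_frag_of monmul_def i j sgnpair_singletons add.commute insert_commute)
  qed (simp_all add: mulR_diff_left mulR_diff_right)
qed (simp_all add: mulR_diff_left mulR_diff_right)

lemma mulR_self_omega_linear:
  assumes "omega_linear f"
  shows "mulR f f = 0"
proof -
  have "omega_linear f \<and> mulR f f = 0"
    using assms unfolding omega_linear_def
  proof (induction f rule: frag_induction)
    case (one x)
    then obtain i where "snd x = {i}" by (auto simp: card_Suc_eq)
    then show ?case by (simp add: omega_linear_def mulR_frag_of monmul_def keys_frag_of)
  next
    case (diff a b)
    then have "omega_linear (a - b)"
      unfolding omega_linear_def using keys_diff[of a b] by blast
    moreover have "mulR (a - b) (a - b) = mulR a a - (mulR a b + mulR b a) + mulR b b"
      by (simp add: mulR_diff_left mulR_diff_right algebra_simps)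
    moreover have "mulR a b + mulR b a = 0"
      using mulR_anticommute_omega_linear[of a b] diff by (simp add: omega_linear_def)
    ultimately show ?case using diff by (simp add: omega_linear_def)
  qed simp
  then show ?thesis ..
qed

type_synonym zpoly = "(nat \<Rightarrow>\<^sub>0 nat) \<Rightarrow>\<^sub>0 int"

definition of_poly :: "zpoly \<Rightarrow> R" where
  "of_poly p = frag_extend (\<lambda>\<alpha>. frag_of (\<alpha>, {})) p"

definition pvar :: "nat \<Rightarrow> zpoly" where "pvar i = frag_of (Poly_Mapping.single i 1)"

lemma of_poly_add: "of_poly (p + q) = of_poly p + of_poly q" by (simp add: of_poly_def frag_extend_add)

lemma of_poly_diff: "of_poly (p - q) = of_poly p - of_poly q" by (simp add: of_poly_def frag_extend_diff)

lemma of_poly_0[simp]: "of_poly 0 = 0" by (simp add: of_poly_def)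

lemma of_poly_of[simp]: "of_poly (frag_of \<alpha>) = frag_of (\<alpha>, {})" by (simp add: of_poly_def)

lemma of_poly_1[simp]: "of_poly 1 = oneR"
proof -
  have e: "(1::zpoly) = frag_of 0" by simp
  have "of_poly (frag_of 0) = oneR" unfolding of_poly_of oneR_def ..
  then show ?thesis using e by metis
qed

lemma xv_of_poly: "xv i = of_poly (pvar i)" by (simp add: xv_def pvar_def)

lemma omega_free_of_poly: "omega_free (of_poly p)"
proof -
  have "Poly_Mapping.keys (of_poly p) \<subseteq> (\<Union>x\<in>Poly_Mapping.keys p. Poly_Mapping.keys (frag_of (x, {})))"
    unfolding of_poly_def by (rule keys_frag_extend)
  then show ?thesis by (auto simp: omega_free_def)
qed

lemma omega_finite_of_poly: "omega_finite (of_poly p)" by (rule omega_finite_omega_free[OF omega_free_of_poly])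

lemma of_poly_mult: "of_poly (p * q) = mulR (of_poly p) (of_poly q)"
proof (induction p rule: frag_induction[OF subset_UNIV])
  case 1 then show ?case by simp
next
  case (3 a b) then show ?case by (simp add: left_diff_distrib of_poly_diff mulR_diff_left)
next
  case (2 x)
  show ?case
  proof (induction q rule: frag_induction[OF subset_UNIV])
    case 1 then show ?case by simp
  next
    case (3 a b) then show ?case by (simp add: right_diff_distrib of_poly_diff mulR_diff_right)
  next
    case (2 y) then show ?case by (simp add: mult_single mulR_frag_of monmul_def)
  qed
qed

lemma lookup_of_poly: "Poly_Mapping.lookup (of_poly p) (\<alpha>, S) = (if S = {} then Poly_Mapping.lookup p \<alpha> else 0)"
proof (induction p rule: frag_induction[OF subset_UNIV])
  case 1 then show ?case by simp
next
  case (2 x) then show ?case by (simp add: lookup_single when_def)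
next
  case (3 a b) then show ?case by (simp add: of_poly_diff lookup_minus)
qed

definition omega_coeff :: "nat set \<Rightarrow> R \<Rightarrow> zpoly" where
  "omega_coeff S f = Abs_poly_mapping (\<lambda>\<alpha>. Poly_Mapping.lookup f (\<alpha>, S))"

lemma lookup_omega_coeff: "Poly_Mapping.lookup (omega_coeff S f) \<alpha> = Poly_Mapping.lookup f (\<alpha>, S)"
proof -
  have "{\<alpha>. Poly_Mapping.lookup f (\<alpha>, S) \<noteq> 0} \<subseteq> fst ` Poly_Mapping.keys f"
    by (force simp: in_keys_iff)
  then have "finite {\<alpha>. Poly_Mapping.lookup f (\<alpha>, S) \<noteq> 0}"
    by (rule finite_subset) simp
  then show ?thesis by (simp add: omega_coeff_def)
qed

lemma omega_coeff_diff: "omega_coeff S (f - g) = omega_coeff S f - omega_coeff S g"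
  by (rule poly_mapping_eqI) (simp add: lookup_omega_coeff lookup_minus)

lemma omega_coeff_add: "omega_coeff S (f + g) = omega_coeff S f + omega_coeff S g"
  by (rule poly_mapping_eqI) (simp add: lookup_omega_coeff lookup_add)

lemma omega_coeff_0[simp]: "omega_coeff S 0 = 0"
  by (rule poly_mapping_eqI) (simp add: lookup_omega_coeff)

lemma omega_coeff_cmul: "omega_coeff S (frag_cmul c f) = frag_cmul c (omega_coeff S f)"
  by (rule poly_mapping_eqI) (simp add: lookup_omega_coeff)

lemma omega_coeff_sum: "finite A \<Longrightarrow> omega_coeff S (\<Sum>i\<in>A. f i) = (\<Sum>i\<in>A. omega_coeff S (f i))"
  by (induction A rule: finite_induct) (simp_all add: omega_coeff_add)

lemma omega_coeff_frag_of: "omega_coeff S (frag_of (\<alpha>, T)) = (if T = S then frag_of \<alpha> else 0)"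
  by (rule poly_mapping_eqI) (simp add: lookup_omega_coeff lookup_single when_def)

lemma omega_coeff_single:
  "omega_coeff S (Poly_Mapping.single (\<alpha>, T) c) = (if T = S then Poly_Mapping.single \<alpha> c else 0)"
  by (rule poly_mapping_eqI) (simp add: lookup_omega_coeff lookup_single when_def)

lemma omega_coeff_oneR: "omega_coeff K oneR = (if K = {} then 1 else 0)"
  by (simp add: oneR_def omega_coeff_single)

lemma omega_coeff_omv: "omega_coeff K (omv j) = (if K = {j} then 1 else 0)"
  by (simp add: omv_def omega_coeff_frag_of)

lemma omega_coeff_eq_0: "(\<And>S. omega_coeff S f = 0) \<Longrightarrow> f = 0"
proof (rule poly_mapping_eqI)
  fix k :: mon
  assume "\<And>S. omega_coeff S f = 0"
  then have "Poly_Mapping.lookup (omega_coeff (snd k) f) (fst k) = 0" by simp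
  then show "Poly_Mapping.lookup f k = Poly_Mapping.lookup 0 k" by (simp add: lookup_omega_coeff)
qed

lemma omega_coeff_eqI: "(\<And>S. omega_coeff S f = omega_coeff S g) \<Longrightarrow> f = g"
  using omega_coeff_eq_0[of "f - g"] by (simp add: omega_coeff_diff)

lemma omega_coeff_nonzero_iff: "omega_coeff K f \<noteq> 0 \<longleftrightarrow> (\<exists>\<alpha>. (\<alpha>, K) \<in> Poly_Mapping.keys f)"
proof
  assume "omega_coeff K f \<noteq> 0"
  then obtain \<alpha> where "Poly_Mapping.lookup (omega_coeff K f) \<alpha> \<noteq> 0"
    by (metis lookup_zero poly_mapping_eqI)
  then show "\<exists>\<alpha>. (\<alpha>, K) \<in> Poly_Mapping.keys f" by (auto simp: lookup_omega_coeff in_keys_iff)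
next
  assume "\<exists>\<alpha>. (\<alpha>, K) \<in> Poly_Mapping.keys f"
  then show "omega_coeff K f \<noteq> 0" by (metis in_keys_iff lookup_omega_coeff lookup_zero)
qed

lemma omega_free_eq_of_poly:
  assumes "omega_free f"
  shows "f = of_poly (omega_coeff {} f)"
proof (rule poly_mapping_eqI)
  fix k :: mon
  show "Poly_Mapping.lookup f k = Poly_Mapping.lookup (of_poly (omega_coeff {} f)) k"
    using assms by (cases k) (auto simp: omega_free_def in_keys_iff lookup_of_poly lookup_omega_coeff)
qed

lemma omega_coeff_of_poly_mult: "omega_coeff S (mulR (of_poly p) g) = p * omega_coeff S g"
proof (induction p rule: frag_induction[OF subset_UNIV])
  case 1 then show ?case by simp
next
  case (3 a b) then show ?case by (simp add: left_diff_distrib of_poly_diff mulR_diff_left omega_coeff_diff)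
next
  case (2 x)
  show ?case
  proof (induction g rule: frag_induction[OF subset_UNIV])
    case 1 then show ?case by simp
  next
    case (3 a b) then show ?case by (simp add: right_diff_distrib mulR_diff_right omega_coeff_diff)
  next
    case (2 y) then show ?case by (cases y) (simp add: mult_single mulR_frag_of monmul_def omega_coeff_frag_of)
  qed
qed

lemma of_poly_mult_cancel:
  assumes "p \<noteq> 0" "mulR (of_poly p) g = mulR (of_poly p) h"
  shows "g = h"
proof (rule omega_coeff_eqI)
  fix S
  have "p * omega_coeff S g = p * omega_coeff S h" using assms(2) by (metis omega_coeff_of_poly_mult)
  then show "omega_coeff S g = omega_coeff S h" using assms(1) by simp
qed

lemma of_int_zpoly: "(of_int c :: zpoly) = Poly_Mapping.single 0 c"
proof -
  have "Poly_Mapping.single 0 (of_int c :: int) = (of_int c :: zpoly)" by (rule single_of_int)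
  then show ?thesis by simp
qed

lemma omega_coeff_mulR_frag_of:
  "omega_coeff K (mulR (frag_of (\<alpha>, U0)) (frag_of (\<beta>, V0))) =
     (if U0 \<inter> V0 = {} \<and> U0 \<union> V0 = K then of_int (sgnpair U0 V0) * (frag_of \<alpha> * frag_of \<beta>) else 0)"
  by (simp add: mulR_frag_of monmul_def omega_coeff_cmul omega_coeff_single mult_single
      frag_cmul_single of_int_zpoly)

lemma omega_coeff_mulR:
  assumes A: "finite A" "\<forall>k\<in>Poly_Mapping.keys f. snd k \<in> A"
    and B: "finite B" "\<forall>k\<in>Poly_Mapping.keys g. snd k \<in> B"
  shows "omega_coeff K (mulR f g) = (\<Sum>S\<in>A. \<Sum>T\<in>B. if S \<inter> T = {} \<and> S \<union> T = K
           then of_int (sgnpair S T) * (omega_coeff S f * omega_coeff T g) else 0)"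
proof -
  define F where "F f g S T = (if S \<inter> T = {} \<and> S \<union> T = K
      then of_int (sgnpair S T) * (omega_coeff S f * omega_coeff T g) else (0::zpoly))" for f g S T
  have "Poly_Mapping.keys f \<subseteq> {k. snd k \<in> A}" using A by auto
  then have "omega_coeff K (mulR f g) = (\<Sum>S\<in>A. \<Sum>T\<in>B. F f g S T)"
  proof (induction f rule: frag_induction)
    case (one x)
    obtain \<alpha> U where x: "x = (\<alpha>, U)" and U: "U \<in> A" using one by (cases x) auto
    have "Poly_Mapping.keys g \<subseteq> {k. snd k \<in> B}" using B by auto
    then show ?case
    proof (induction g rule: frag_induction)
      case (one y)
      obtain \<beta> V where y: "y = (\<beta>, V)" and V: "V \<in> B" using one by (cases y) auto
      have "(\<Sum>S\<in>A. \<Sum>T\<in>B. F (frag_of x) (frag_of y) S T) = (\<Sum>T\<in>B. F (frag_of x) (frag_of y) U T)"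
        by (rule sum_eq_single) (auto simp: A U x F_def omega_coeff_frag_of cong: if_cong)
      also have "\<dots> = F (frag_of x) (frag_of y) U V"
        by (rule sum_eq_single) (auto simp: B V y F_def omega_coeff_frag_of cong: if_cong)
      finally show ?case by (simp add: x y F_def omega_coeff_mulR_frag_of omega_coeff_frag_of)
    qed (simp_all add: F_def mulR_diff_right omega_coeff_diff sum_subtractf[symmetric] algebra_simps
        if_distrib cong: if_cong)
  qed (simp_all add: F_def mulR_diff_left omega_coeff_diff sum_subtractf[symmetric] algebra_simps
      if_distrib cong: if_cong)
  then show ?thesis by (simp add: F_def)
qed

lemma omega_coeff_mulR_nonzero:
  assumes "omega_coeff K (mulR f g) \<noteq> 0"
  obtains S T where "S \<inter> T = {}" "S \<union> T = K" "omega_coeff S f \<noteq> 0" "omega_coeff T g \<noteq> 0"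
proof -
  obtain \<alpha> where "(\<alpha>, K) \<in> Poly_Mapping.keys (mulR f g)" using assms omega_coeff_nonzero_iff by blast
  then obtain a b where "a \<in> Poly_Mapping.keys f" "b \<in> Poly_Mapping.keys g"
      "snd a \<inter> snd b = {}" "K = snd a \<union> snd b"
    using keys_mulR by fastforce
  then show thesis using that[of "snd a" "snd b"] omega_coeff_nonzero_iff by (metis prod.collapse)
qed

definition omega_in :: "nat \<Rightarrow> R \<Rightarrow> bool" where
  "omega_in n f \<longleftrightarrow> (\<forall>k\<in>Poly_Mapping.keys f. snd k \<subseteq> {1..n})"

lemma omega_in_mulR: "omega_in n f \<Longrightarrow> omega_in n g \<Longrightarrow> omega_in n (mulR f g)"
  unfolding omega_in_def by (fastforce dest: keys_mulR)

lemma omega_in_add: "omega_in n f \<Longrightarrow> omega_in n g \<Longrightarrow> omega_in n (f + g)"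
  unfolding omega_in_def using keys_add[of f g] by blast

lemma omega_in_0[simp]: "omega_in n 0" by (simp add: omega_in_def)

lemma omega_in_oneR[simp]: "omega_in n oneR" by (simp add: omega_in_def oneR_def)

lemma omega_in_sum: "(\<And>i. i \<in> A \<Longrightarrow> omega_in n (f i)) \<Longrightarrow> omega_in n (\<Sum>i\<in>A. f i)"
  by (induction A rule: infinite_finite_induct) (auto intro: omega_in_add)

lemma omega_in_omega_free: "omega_free f \<Longrightarrow> omega_in n f"
  unfolding omega_in_def omega_free_def by auto

lemma omega_in_of_poly: "omega_in n (of_poly p)" by (rule omega_in_omega_free[OF omega_free_of_poly])

lemma omega_in_omv: "j \<in> {1..n} \<Longrightarrow> omega_in n (omv j)" by (simp add: omega_in_def omv_def)

lemma omega_coeff_omega_in: "omega_in n f \<Longrightarrow> omega_coeff K f \<noteq> 0 \<Longrightarrow> K \<subseteq> {1..n}"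
  unfolding omega_in_def omega_coeff_nonzero_iff by fastforce

definition ordered_prod :: "(nat \<Rightarrow> R) \<Rightarrow> nat set \<Rightarrow> R" where
  "ordered_prod y S = foldr mulR (map y (sorted_list_of_set S)) oneR"

lemma ordered_prod_empty[simp]: "ordered_prod y {} = oneR" by (simp add: ordered_prod_def)

lemma ordered_prod_cong: "finite S \<Longrightarrow> (\<And>j. j \<in> S \<Longrightarrow> y j = z j) \<Longrightarrow> ordered_prod y S = ordered_prod z S"
  unfolding ordered_prod_def by (metis (mono_tags, lifting) map_eq_conv set_sorted_list_of_set)

lemma ordered_prod_insert_min:
  assumes "finite S" "\<forall>t\<in>S. s < t"
  shows "ordered_prod y (insert s S) = mulR (y s) (ordered_prod y S)"
proof -
  have m: "Min (insert s S) = s" using assms by (auto intro: Min_eqI simp: less_imp_le)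
  have r: "insert s S - {s} = S" using assms by auto
  have l: "sorted_list_of_set (insert s S) = Min (insert s S) # sorted_list_of_set (insert s S - {Min (insert s S)})"
    by (rule sorted_list_of_set_nonempty) (use assms in auto)
  show ?thesis unfolding ordered_prod_def l m r by simp
qed

lemma omega_finite_foldr: "(\<And>j. omega_finite (y j)) \<Longrightarrow> omega_finite (foldr mulR (map y xs) oneR)"
  by (induction xs) (auto intro: omega_finite_mulR)

lemma omega_finite_ordered_prod: "(\<And>j. omega_finite (y j)) \<Longrightarrow> omega_finite (ordered_prod y S)"
  unfolding ordered_prod_def by (rule omega_finite_foldr)

lemma omega_in_ordered_prod: "(\<And>j. j \<in> I \<Longrightarrow> omega_in n (y j)) \<Longrightarrow> omega_in n (ordered_prod y I)"
proof -
  assume a: "\<And>j. j \<in> I \<Longrightarrow> omega_in n (y j)"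
  have "\<forall>x\<in>set xs. x \<in> I \<Longrightarrow> omega_in n (foldr mulR (map y xs) oneR)" for xs
    using a by (induction xs) (auto intro: omega_in_mulR)
  then show ?thesis unfolding ordered_prod_def
    by (cases "finite I") auto
qed

lemma ordered_prod_omv: "finite S \<Longrightarrow> ordered_prod omv S = frag_of (0, S)"
proof (induction S rule: finite_linorder_min_induct)
  case empty then show ?case by (simp add: oneR_def)
next
  case (insert b A)
  have e: "{t \<in> A. t < b} = {}" using insert by auto
  have s: "sgnpair {b} A = 1" unfolding sgnpair_singleton_left e by simp
  have bA: "b \<notin> A" using insert by auto
  have e: "ordered_prod omv (insert b A) = mulR (omv b) (ordered_prod omv A)"
    using insert by (intro ordered_prod_insert_min) auto
  show ?case unfolding e insert.IH using bA s by (simp add: omv_def mulR_frag_of monmul_def)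
qed

lemma mulR_ordered_prod_insert_min:
  assumes od: "\<And>j. omega_linear (y j)" and "finite A" "\<forall>t\<in>A. b < t"
  shows "mulR (y s) (ordered_prod y (insert b A)) = - mulR (y b) (mulR (y s) (ordered_prod y A))"
proof -
  have fs: "\<And>j. omega_finite (y j)" using od omega_finite_omega_linear by blast
  have "mulR (y s) (ordered_prod y (insert b A)) = mulR (mulR (y s) (y b)) (ordered_prod y A)"
    using assms by (simp add: ordered_prod_insert_min mulR_assoc fs omega_finite_ordered_prod)
  also have "mulR (y s) (y b) = - mulR (y b) (y s)"
    using mulR_anticommute_omega_linear od by blast
  finally show ?thesis by (simp add: mulR_minus_left mulR_assoc fs omega_finite_ordered_prod)
qed

lemma mulR_ordered_prod:
  assumes od: "\<And>j. omega_linear (y j)" and "finite S"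
  shows "mulR (y s) (ordered_prod y S) =
    (if s \<in> S then 0 else frag_cmul ((-1) ^ card {t\<in>S. t < s}) (ordered_prod y (insert s S)))"
  using assms(2)
proof (induction S arbitrary: s rule: finite_linorder_min_induct)
  case empty
  then show ?case by (simp add: ordered_prod_insert_min)
next
  case (insert b A)
  have swap: "mulR (y s) (ordered_prod y (insert b A)) = - mulR (y b) (mulR (y s) (ordered_prod y A))"
    using insert by (intro mulR_ordered_prod_insert_min od) auto
  consider "s < b" | "s = b" | "b < s" by linarith
  then show ?case
  proof cases
    case 1
    then have "{t \<in> insert b A. t < s} = {}" and s: "s \<notin> insert b A" using insert by auto
    then have "(-1::int) ^ card {t \<in> insert b A. t < s} = 1" by (simp only: card.empty power_0)
    moreover note s
    moreover have "ordered_prod y (insert s (insert b A)) = mulR (y s) (ordered_prod y (insert b A))"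
      using 1 insert by (intro ordered_prod_insert_min) auto
    ultimately show ?thesis by simp
  next
    case 2
    have "mulR (y b) (y b) = 0" by (rule mulR_self_omega_linear[OF od])
    then show ?thesis
      using swap od 2 by (simp add: mulR_assoc[symmetric] omega_finite_omega_linear omega_finite_ordered_prod)
  next
    case 3
    show ?thesis
    proof (cases "s \<in> A")
      case True
      then show ?thesis using swap insert.IH by simp
    next
      case False
      have "{t. (t = b \<or> t \<in> A) \<and> t < s} = insert b {t\<in>A. t < s}" "b \<notin> {t\<in>A. t < s}"
        using 3 insert by auto
      then have card: "card {t. (t = b \<or> t \<in> A) \<and> t < s} = Suc (card {t\<in>A. t < s})"
        using insert.hyps(1) by simp
      have "ordered_prod y (insert b (insert s A)) = mulR (y b) (ordered_prod y (insert s A))"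
        using insert 3 by (intro ordered_prod_insert_min) auto
      then show ?thesis
        using swap insert.IH False 3 by (simp add: mulR_cmul_right card insert_commute)
    qed
  qed
qed

lemma ordered_prod_mult:
  assumes od: "\<And>j. omega_linear (y j)" and "finite S" "finite T"
  shows "mulR (ordered_prod y S) (ordered_prod y T) =
    (if S \<inter> T = {} then frag_cmul (sgnpair S T) (ordered_prod y (S \<union> T)) else 0)"
  using assms(2)
proof (induction S rule: finite_linorder_min_induct)
  case (insert b A)
  have "mulR (ordered_prod y (insert b A)) (ordered_prod y T) = mulR (y b) (mulR (ordered_prod y A) (ordered_prod y T))"
    using insert od
    by (simp add: ordered_prod_insert_min mulR_assoc omega_finite_omega_linear omega_finite_ordered_prod)
  also have "\<dots> = (if A \<inter> T = {} then frag_cmul (sgnpair A T) (mulR (y b) (ordered_prod y (A \<union> T))) else 0)"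
    using insert.IH by (simp add: mulR_cmul_right)
  also have "\<dots> = (if insert b A \<inter> T = {}
      then frag_cmul (sgnpair (insert b A) T) (ordered_prod y (insert b A \<union> T)) else 0)"
  proof -
    have "b \<notin> A" "{t. (t \<in> A \<or> t \<in> T) \<and> t < b} = {t. t \<in> T \<and> t < b}" using insert.hyps by auto
    moreover have "sgnpair (insert b A) T = sgnpair {b} T * sgnpair A T"
      using sgnpair_Un_left[of "{b}" A T] insert.hyps by auto
    ultimately show ?thesis
      using mulR_ordered_prod[of y "A \<union> T" b, OF od] insert.hyps assms(3)
      by (auto simp: sgnpair_singleton_left mult.commute)
  qed
  finally show ?case .
qed simp

definition adj_swap :: "nat \<Rightarrow> nat \<Rightarrow> nat" where
  "adj_swap i j = (if j = i then Suc i else if j = Suc i then i else j)"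

lemma adj_swap_adj_swap[simp]: "adj_swap i (adj_swap i j) = j" by (simp add: adj_swap_def)

lemma map_adj_swap_id: "(\<And>x. x \<in> set L \<Longrightarrow> x \<noteq> i \<and> x \<noteq> Suc i) \<Longrightarrow> map (adj_swap i) L = L"
  by (induction L) (auto simp: adj_swap_def)

lemma lookup_swap_exp: "Poly_Mapping.lookup (swap_exp i \<alpha>) j = Poly_Mapping.lookup \<alpha> (adj_swap i j)"
proof -
  have "{j. Poly_Mapping.lookup \<alpha> (adj_swap i j) \<noteq> 0} \<subseteq> adj_swap i ` Poly_Mapping.keys \<alpha>"
  proof
    fix x assume "x \<in> {j. Poly_Mapping.lookup \<alpha> (adj_swap i j) \<noteq> 0}"
    then have "adj_swap i x \<in> Poly_Mapping.keys \<alpha>" by (simp add: in_keys_iff)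
    then show "x \<in> adj_swap i ` Poly_Mapping.keys \<alpha>" by (rule image_eqI[rotated]) simp
  qed
  then have "finite {j. Poly_Mapping.lookup \<alpha> (adj_swap i j) \<noteq> 0}"
    by (rule finite_subset) simp
  moreover have "(\<lambda>j. Poly_Mapping.lookup \<alpha> (if j = i then i + 1 else if j = i + 1 then i else j))
      = (\<lambda>j. Poly_Mapping.lookup \<alpha> (adj_swap i j))"
    by (rule ext) (simp add: adj_swap_def)
  ultimately show ?thesis by (simp add: swap_exp_def)
qed

lemma swap_exp_add: "swap_exp i (\<alpha> + \<beta>) = swap_exp i \<alpha> + swap_exp i \<beta>"
  by (rule poly_mapping_eqI) (simp add: lookup_swap_exp lookup_add)

lemma swap_exp_0[simp]: "swap_exp i 0 = 0"
  by (rule poly_mapping_eqI) (simp add: lookup_swap_exp)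

lemma swap_exp_swap[simp]: "swap_exp i (swap_exp i \<alpha>) = \<alpha>"
  by (rule poly_mapping_eqI) (simp add: lookup_swap_exp)

lemma swap_exp_single: "swap_exp i (Poly_Mapping.single j k) = Poly_Mapping.single (adj_swap i j) k"
  by (rule poly_mapping_eqI) (auto simp: lookup_swap_exp lookup_single when_def adj_swap_def)

definition poly_swap :: "nat \<Rightarrow> zpoly \<Rightarrow> zpoly" where
  "poly_swap i p = frag_extend (\<lambda>\<alpha>. frag_of (swap_exp i \<alpha>)) p"

lemma poly_swap_add: "poly_swap i (p + q) = poly_swap i p + poly_swap i q"
  by (simp add: poly_swap_def frag_extend_add)

lemma poly_swap_diff: "poly_swap i (p - q) = poly_swap i p - poly_swap i q"
  by (simp add: poly_swap_def frag_extend_diff)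

lemma poly_swap_minus: "poly_swap i (- p) = - poly_swap i p" by (simp add: poly_swap_def frag_extend_minus)

lemma poly_swap_0[simp]: "poly_swap i 0 = 0" by (simp add: poly_swap_def)

lemma poly_swap_of[simp]: "poly_swap i (frag_of \<alpha>) = frag_of (swap_exp i \<alpha>)" by (simp add: poly_swap_def)

lemma poly_swap_1[simp]: "poly_swap i 1 = 1"
proof -
  have e: "(1::zpoly) = frag_of 0" by simp
  have "poly_swap i (frag_of 0) = frag_of (swap_exp i 0)" by (rule poly_swap_of)
  then show ?thesis using e swap_exp_0 by metis
qed

lemma poly_swap_pvar: "poly_swap i (pvar j) = pvar (adj_swap i j)" by (simp add: pvar_def swap_exp_single)

lemma poly_swap_mult: "poly_swap i (p * q) = poly_swap i p * poly_swap i q"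
proof (induction p rule: frag_induction[OF subset_UNIV])
  case 1 then show ?case by simp
next
  case (3 a b) then show ?case by (simp add: left_diff_distrib poly_swap_diff)
next
  case (2 x)
  show ?case
  proof (induction q rule: frag_induction[OF subset_UNIV])
    case 1 then show ?case by simp
  next
    case (3 a b) then show ?case by (simp add: right_diff_distrib poly_swap_diff)
  next
    case (2 y) then show ?case by (simp add: mult_single swap_exp_add)
  qed
qed

lemma poly_swap_power: "poly_swap i (p ^ k) = poly_swap i p ^ k"
  by (induction k) (simp_all add: poly_swap_mult)

lemma act_frag_extend:
  "act i f = frag_extend (\<lambda>k. mulR (frag_of (swap_exp i (fst k), {})) (ordered_prod (om_img i) (snd k))) f"
  unfolding act_def frag_extend_def ordered_prod_def
  by (intro sum.cong refl) (metis frag_cmul_single mulR_cmul_left mult.right_neutral)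

lemma act_add: "act i (f + g) = act i f + act i g" by (simp add: act_frag_extend frag_extend_add)

lemma act_diff: "act i (f - g) = act i f - act i g" by (simp add: act_frag_extend frag_extend_diff)

lemma act_0[simp]: "act i 0 = 0" by (simp add: act_frag_extend)

lemma act_cmul: "act i (frag_cmul c f) = frag_cmul c (act i f)" by (simp add: act_frag_extend frag_extend_cmul)

lemma act_sum: "finite A \<Longrightarrow> act i (\<Sum>j\<in>A. f j) = (\<Sum>j\<in>A. act i (f j))"
  by (induction A rule: finite_induct) (simp_all add: act_add)

lemma act_of: "act i (frag_of (\<alpha>, S)) = mulR (frag_of (swap_exp i \<alpha>, {})) (ordered_prod (om_img i) S)"
  by (simp add: act_frag_extend)

lemma act_of_poly: "act i (of_poly p) = of_poly (poly_swap i p)"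
  by (induction p rule: frag_induction[OF subset_UNIV])
    (simp_all add: act_of act_diff of_poly_diff poly_swap_diff oneR_def[symmetric])

lemma act_oneR[simp]: "act i oneR = oneR"
  using act_of_poly[of i 1] by simp

lemma act_omv: "act i (omv j) = om_img i j"
proof -
  have "ordered_prod (om_img i) {j} = om_img i j" using ordered_prod_insert_min[of "{}" j "om_img i"] by simp
  then show ?thesis by (simp add: omv_def act_of oneR_def[symmetric])
qed

lemma omega_linear_om_img: "omega_linear (om_img i j)"
  unfolding om_img_def xv_of_poly of_poly_diff[symmetric]
  by (auto intro!: omega_linear_add omega_linear_omv omega_linear_mulR omega_free_of_poly)

lemma omega_finite_frag_of: "finite (snd k) \<Longrightarrow> omega_finite (frag_of k)"
  by (simp add: omega_finite_def)

lemma act_mulR_frag_of: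
  assumes "finite S" "finite T"
  shows "act i (mulR (frag_of (\<alpha>, S)) (frag_of (\<beta>, T))) = mulR (act i (frag_of (\<alpha>, S))) (act i (frag_of (\<beta>, T)))"
proof -
  define Xa :: R where "Xa = frag_of (swap_exp i \<alpha>, {})"
  define Xb :: R where "Xb = frag_of (swap_exp i \<beta>, {})"
  define YS :: R where "YS = ordered_prod (om_img i) S"
  define YT :: R where "YT = ordered_prod (om_img i) T"
  have od: "\<And>j. omega_linear (om_img i j)" by (rule omega_linear_om_img)
  have fs: "omega_finite Xa" "omega_finite YS" "omega_finite YT"
    unfolding Xa_def YS_def YT_def
    by (auto intro: omega_finite_frag_of omega_finite_ordered_prod omega_finite_omega_linear od)
  have ev: "omega_free Xb" by (simp add: Xb_def omega_free_def)
  have "mulR (act i (frag_of (\<alpha>, S))) (act i (frag_of (\<beta>, T))) = mulR (mulR Xa YS) (mulR Xb YT)"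
    by (simp add: act_of Xa_def Xb_def YS_def YT_def)
  also have "\<dots> = mulR Xa (mulR YS (mulR Xb YT))"
    using fs ev by (simp add: mulR_assoc omega_finite_mulR omega_finite_omega_free)
  also have "\<dots> = mulR (mulR Xa Xb) (mulR YS YT)"
    using fs ev by (simp add: mulR_left_commute_omega_free mulR_assoc omega_finite_mulR omega_finite_omega_free)
  also have "\<dots> = act i (mulR (frag_of (\<alpha>, S)) (frag_of (\<beta>, T)))"
    using ordered_prod_mult[OF od assms]
    by (simp add: Xa_def Xb_def YS_def YT_def act_of mulR_frag_of monmul_def swap_exp_add act_cmul mulR_cmul_right)
  finally show ?thesis ..
qed

lemma act_mulR:
  assumes "omega_finite f" "omega_finite g"
  shows "act i (mulR f g) = mulR (act i f) (act i g)"
  using assms(1) unfolding omega_finite_def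
proof (induction f rule: frag_induction)
  case zero then show ?case by simp
next
  case (diff a b) then show ?case by (simp add: mulR_diff_left act_diff)
next
  case (one x)
  then have x: "finite (snd x)" by simp
  show ?case using assms(2) unfolding omega_finite_def
  proof (induction g rule: frag_induction)
    case zero then show ?case by simp
  next
    case (diff a b) then show ?case by (simp add: mulR_diff_right act_diff)
  next
    case (one y)
    then show ?case using x act_mulR_frag_of[of "snd x" "snd y" i "fst x" "fst y"] by simp
  qed
qed

lemma act_ordered_prod: "(\<And>j. omega_finite (y j)) \<Longrightarrow> act a (ordered_prod y S) = ordered_prod (\<lambda>j. act a (y j)) S"
proof -
  assume fs: "\<And>j. omega_finite (y j)"
  have "act a (foldr mulR (map y xs) oneR) = foldr mulR (map (\<lambda>j. act a (y j)) xs) oneR" for xs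
    by (induction xs) (simp_all add: act_mulR fs omega_finite_foldr)
  then show ?thesis by (simp add: ordered_prod_def)
qed

lemma act_omega_free: "omega_free f \<Longrightarrow> omega_free (act a f)"
  using omega_free_eq_of_poly[of f] by (metis act_of_poly omega_free_of_poly)

definition omega_lin :: "nat \<Rightarrow> (nat \<Rightarrow> zpoly) \<Rightarrow> R" where
  "omega_lin n c = (\<Sum>j\<in>{1..n}. mulR (of_poly (c j)) (omv j))"

text \<open>Since s_a(omega_a) = omega_a + (x_a - x_(a+1)) omega_(a+1), applying s_a to
  the sum of the c_j omega_j gives coefficients swap_coeffs a c (see act_omega_lin).\<close>

definition swap_coeffs :: "nat \<Rightarrow> (nat \<Rightarrow> zpoly) \<Rightarrow> nat \<Rightarrow> zpoly" where
  "swap_coeffs a c j =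
     poly_swap a (c j) + (if j = Suc a then poly_swap a (c a) * (pvar a - pvar (Suc a)) else 0)"

lemma omega_lin_cong: "(\<And>j. j \<in> {1..n} \<Longrightarrow> c j = d j) \<Longrightarrow> omega_lin n c = omega_lin n d"
  unfolding omega_lin_def by (rule sum.cong) auto

lemma omega_lin_diff: "omega_lin n (\<lambda>j. c j - d j) = omega_lin n c - omega_lin n d"
  unfolding omega_lin_def by (simp add: of_poly_diff mulR_diff_left sum_subtractf)

lemma omega_linear_omega_lin: "omega_linear (omega_lin n c)"
  unfolding omega_lin_def by (intro omega_linear_sum omega_linear_mulR omega_free_of_poly omega_linear_omv)

lemma omega_finite_omega_lin: "omega_finite (omega_lin n c)"
  by (rule omega_finite_omega_linear[OF omega_linear_omega_lin])

lemma omega_in_omega_lin: "omega_in n (omega_lin n c)"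
  unfolding omega_lin_def by (intro omega_in_sum omega_in_mulR omega_in_of_poly omega_in_omv) auto

lemma omega_coeff_omega_lin: "omega_coeff K (omega_lin n c) = (\<Sum>j\<in>{1..n}. if K = {j} then c j else 0)"
  unfolding omega_lin_def
  by (simp add: omega_coeff_sum omega_coeff_of_poly_mult omega_coeff_omv if_distrib cong: if_cong)

lemma omega_coeff_singleton_omega_lin: "j \<in> {1..n} \<Longrightarrow> omega_coeff {j} (omega_lin n c) = c j"
  unfolding omega_coeff_omega_lin by (rule trans[OF sum_eq_single[of _ j]]) auto

lemma omega_coeff_omega_lin_not_singleton: "\<not> (\<exists>j\<in>{1..n}. K = {j}) \<Longrightarrow> omega_coeff K (omega_lin n c) = 0"
  unfolding omega_coeff_omega_lin by (rule sum.neutral) auto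

lemma of_poly_omega_lin: "mulR (of_poly p) (omega_lin n c) = omega_lin n (\<lambda>j. p * c j)"
  unfolding omega_lin_def
  by (simp add: mulR_sum_right mulR_assoc[symmetric] omega_finite_of_poly omega_finite_omv of_poly_mult)

lemma act_omega_lin:
  assumes "1 \<le> a" "a < n"
  shows "act a (omega_lin n c) = omega_lin n (swap_coeffs a c)"
proof -
  define q where "q = poly_swap a (c a) * (pvar a - pvar (Suc a))"
  have "mulR (of_poly (poly_swap a (c j))) (om_img a j)
      = mulR (of_poly (poly_swap a (c j))) (omv j) + (if j = a then mulR (of_poly q) (omv (Suc a)) else 0)" for j
    by (simp add: om_img_def q_def xv_of_poly of_poly_diff[symmetric] mulR_add_right of_poly_mult
        mulR_assoc omega_finite_of_poly omega_finite_omv)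
  then have "act a (omega_lin n c) = (\<Sum>j\<in>{1..n}. mulR (of_poly (poly_swap a (c j))) (omv j))
      + mulR (of_poly q) (omv (Suc a))"
    using assms unfolding omega_lin_def
    by (simp add: act_sum act_mulR omega_finite_of_poly omega_finite_omv act_of_poly act_omv sum.distrib)
  also have "\<dots> = omega_lin n (swap_coeffs a c)"
    using assms unfolding omega_lin_def swap_coeffs_def q_def[symmetric]
    by (simp add: of_poly_add mulR_add_left sum.distrib if_distrib[of of_poly]
        if_distrib[of "\<lambda>x. mulR x _"] cong: if_cong)
  finally show ?thesis .
qed

lemma pvar_inj: "pvar a = pvar b \<Longrightarrow> a = b"
  unfolding pvar_def by (metis frag_of_eq lookup_single_eq lookup_single_not_eq one_neq_zero)

lemma demazure_eqI:
  assumes "mulR (xv a - xv (a + 1)) g = f - act a f"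
  shows "demazure a f = g"
  unfolding demazure_def
proof (rule the_equality)
  show "mulR (xv a - xv (a + 1)) g = f - act a f" by (rule assms)
next
  fix g' assume g': "mulR (xv a - xv (a + 1)) g' = f - act a f"
  have ne: "pvar a - pvar (Suc a) \<noteq> 0" using pvar_inj[of a "Suc a"] by auto
  have "mulR (of_poly (pvar a - pvar (Suc a))) g' = mulR (of_poly (pvar a - pvar (Suc a))) g"
    using g' assms by (simp add: xv_of_poly of_poly_diff)
  then show "g' = g" using of_poly_mult_cancel[OF ne] by blast
qed

lemma demazure_omega_lin:
  assumes "1 \<le> a" "a < n"
    and "\<And>j. j \<in> {1..n} \<Longrightarrow> (pvar a - pvar (Suc a)) * d j = c j - swap_coeffs a c j"
  shows "demazure a (omega_lin n c) = omega_lin n d"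
proof (rule demazure_eqI)
  have "mulR (xv a - xv (a + 1)) (omega_lin n d) = omega_lin n (\<lambda>j. (pvar a - pvar (Suc a)) * d j)"
    by (simp add: xv_of_poly of_poly_diff[symmetric] of_poly_omega_lin)
  also have "\<dots> = omega_lin n (\<lambda>j. c j - swap_coeffs a c j)" by (rule omega_lin_cong) (rule assms(3))
  also have "\<dots> = omega_lin n c - act a (omega_lin n c)"
    using act_omega_lin[OF assms(1,2), of c] omega_lin_diff[of n c "swap_coeffs a c"] by simp
  finally show "mulR (xv a - xv (a + 1)) (omega_lin n d) = omega_lin n c - act a (omega_lin n c)" .
qed

section \<open>Complete homogeneous polynomials\<close>

fun complete_hom :: "nat \<Rightarrow> nat list \<Rightarrow> zpoly" where
  "complete_hom 0 L = 1"
| "complete_hom (Suc k) [] = 0"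
| "complete_hom (Suc k) (v # vs) = pvar v * complete_hom k (v # vs) + complete_hom (Suc k) vs"

lemma complete_hom_diff:
  "complete_hom (Suc k) (a # Y) - complete_hom (Suc k) (b # Y) = (pvar a - pvar b) * complete_hom k (a # b # Y)"
proof (induction k)
  case 0 then show ?case by simp
next
  case (Suc k)
  have "complete_hom (Suc (Suc k)) (a # Y) - complete_hom (Suc (Suc k)) (b # Y)
      = pvar a * (complete_hom (Suc k) (a # Y) - complete_hom (Suc k) (b # Y))
        + (pvar a - pvar b) * complete_hom (Suc k) (b # Y)"
    by (simp add: algebra_simps)
  also have "\<dots> = (pvar a - pvar b) * (pvar a * complete_hom k (a # b # Y) + complete_hom (Suc k) (b # Y))"
    by (simp only: Suc) (simp add: algebra_simps del: complete_hom.simps)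
  also have "\<dots> = (pvar a - pvar b) * complete_hom (Suc k) (a # b # Y)" by simp
  finally show ?case .
qed

lemma complete_hom_swap_head: "complete_hom k (a # b # Y) = complete_hom k (b # a # Y)"
proof (cases "a = b")
  case False
  have "(pvar a - pvar b) * complete_hom k (a # b # Y) = (pvar a - pvar b) * complete_hom k (b # a # Y)"
    using complete_hom_diff[of k a Y b] complete_hom_diff[of k b Y a]
    by (metis minus_diff_eq mult_minus_left)
  moreover have "pvar a - pvar b \<noteq> 0" using False pvar_inj by auto
  ultimately show ?thesis by simp
qed simp

lemma complete_hom_cong_cons:
  "(\<And>j. complete_hom j L = complete_hom j L') \<Longrightarrow> complete_hom k (v # L) = complete_hom k (v # L')"
  by (induction k) simp_all

lemma complete_hom_swap_mid: "complete_hom k (xs @ a # b # ys) = complete_hom k (xs @ b # a # ys)"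
proof (induction xs arbitrary: k)
  case Nil then show ?case by (simp add: complete_hom_swap_head)
next
  case (Cons x xs)
  show ?case unfolding append_Cons by (rule complete_hom_cong_cons) (rule Cons)
qed

lemma complete_hom_rotate: "complete_hom k (a # L) = complete_hom k (L @ [a])"
proof (induction L arbitrary: k)
  case Nil then show ?case by simp
next
  case (Cons b L)
  have "complete_hom k (a # b # L) = complete_hom k (b # a # L)" by (rule complete_hom_swap_head)
  also have "\<dots> = complete_hom k (b # (L @ [a]))" by (rule complete_hom_cong_cons) (rule Cons)
  finally show ?case by simp
qed

lemma complete_hom_append_comm: "complete_hom k (L @ M) = complete_hom k (M @ L)"
proof (induction L arbitrary: k M)
  case Nil then show ?case by simp
next
  case (Cons a L)
  have "complete_hom k ((a # L) @ M) = complete_hom k ((L @ M) @ [a])" using complete_hom_rotate by simp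
  also have "\<dots> = complete_hom k (L @ (M @ [a]))" by simp
  also have "\<dots> = complete_hom k ((M @ [a]) @ L)" by (rule Cons)
  finally show ?case by simp
qed

lemma poly_swap_complete_hom: "poly_swap i (complete_hom k L) = complete_hom k (map (adj_swap i) L)"
  by (induction k L rule: complete_hom.induct) (simp_all add: poly_swap_add poly_swap_mult poly_swap_pvar)

lemma complete_hom_singleton: "complete_hom k [v] = pvar v ^ k"
  by (induction k) simp_all

lemma pvar_mult_complete_hom_diff:
  "pvar x * complete_hom k (x # Y) - pvar y * complete_hom k (y # Y) = (pvar x - pvar y) * complete_hom k (x # y # Y)"
proof -
  have "pvar x * complete_hom k (x # Y) = complete_hom (Suc k) (x # Y) - complete_hom (Suc k) Y" by simp
  moreover have "pvar y * complete_hom k (y # Y) = complete_hom (Suc k) (y # Y) - complete_hom (Suc k) Y" by simp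
  ultimately show ?thesis using complete_hom_diff[of k x Y y] by simp
qed

text \<open>S0_coeff i n j is the coefficient of omega_j in S_(0,i), namely
  (-1)^(j-i) h_(j-i)(x_j, ..., x_n) for i \<le> j \<le> n. The value 1 at j = i > n only serves the
  first step of the induction over n in S0_omega_lin.\<close>

definition S0_coeff :: "nat \<Rightarrow> nat \<Rightarrow> nat \<Rightarrow> zpoly" where
  "S0_coeff i m j = (if i \<le> j \<and> j \<le> m then (-1) ^ (j - i) * complete_hom (j - i) [j..<Suc m]
     else if j = i then 1 else 0)"

text \<open>By demazure_omega_lin, demazure_step u m says that the Demazure operator for s_m maps
  x_m times the sum of the u m j omega_j to the sum of the u (m+1) j omega_j.\<close>

definition demazure_step :: "(nat \<Rightarrow> nat \<Rightarrow> zpoly) \<Rightarrow> nat \<Rightarrow> bool" where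
  "demazure_step u m \<longleftrightarrow> (\<forall>j. (pvar m - pvar (Suc m)) * u (Suc m) j
     = pvar m * u m j - swap_coeffs m (\<lambda>j. pvar m * u m j) j)"

lemma swap_coeffs_pvar: "swap_coeffs m (\<lambda>j. pvar m * v j) j = pvar (Suc m) * swap_coeffs m v j"
  by (simp add: swap_coeffs_def poly_swap_mult poly_swap_pvar adj_swap_def algebra_simps)

lemma swap_coeffs_mult_inv: "poly_swap m q = q \<Longrightarrow> swap_coeffs m (\<lambda>j. q * v j) j = q * swap_coeffs m v j"
  by (simp add: swap_coeffs_def poly_swap_mult algebra_simps)

lemma complete_hom_upt_demazure:
  assumes "j \<le> m"
  shows "(pvar m - pvar (Suc m)) * complete_hom k [j..<Suc (Suc m)]
       = pvar m * complete_hom k [j..<Suc m] - pvar (Suc m) * poly_swap m (complete_hom k [j..<Suc m])"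
proof -
  have split: "[j..<Suc m] = [j..<m] @ [m]" "[j..<Suc (Suc m)] = [j..<m] @ [m, Suc m]"
    using assms by simp_all
  have fixed: "map (adj_swap m) [j..<m] = [j..<m]" by (rule map_adj_swap_id) auto
  have "complete_hom k [j..<Suc m] = complete_hom k (m # [j..<m])"
    "complete_hom k [j..<Suc (Suc m)] = complete_hom k (m # Suc m # [j..<m])"
    "poly_swap m (complete_hom k [j..<Suc m]) = complete_hom k (Suc m # [j..<m])"
    unfolding split poly_swap_complete_hom
    using complete_hom_append_comm[of k "[j..<m]"] fixed by (simp_all add: adj_swap_def)
  then show ?thesis by (simp add: pvar_mult_complete_hom_diff)
qed

lemma demazure_step_S0_coeff: "demazure_step (S0_coeff i) m"
  unfolding demazure_step_def swap_coeffs_pvar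
proof
  fix j
  show "(pvar m - pvar (Suc m)) * S0_coeff i (Suc m) j
      = pvar m * S0_coeff i m j - pvar (Suc m) * swap_coeffs m (S0_coeff i m) j"
  proof (cases "i \<le> j \<and> j \<le> m")
    case True
    define k where "k = j - i"
    have "(pvar m - pvar (Suc m)) * S0_coeff i (Suc m) j
        = (-1) ^ k * ((pvar m - pvar (Suc m)) * complete_hom k [j..<Suc (Suc m)])"
      using True by (simp add: S0_coeff_def k_def)
    also have "\<dots> = (-1) ^ k * (pvar m * complete_hom k [j..<Suc m]
        - pvar (Suc m) * poly_swap m (complete_hom k [j..<Suc m]))"
      using True by (simp only: complete_hom_upt_demazure)
    also have "\<dots> = pvar m * S0_coeff i m j - pvar (Suc m) * swap_coeffs m (S0_coeff i m) j"
      using True by (simp add: S0_coeff_def swap_coeffs_def k_def poly_swap_mult poly_swap_power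
          poly_swap_minus algebra_simps)
    finally show ?thesis .
  next
    case False
    then show ?thesis
      by (auto simp: S0_coeff_def swap_coeffs_def complete_hom_singleton poly_swap_mult
          poly_swap_power poly_swap_minus poly_swap_pvar adj_swap_def Suc_diff_le algebra_simps)
  qed
qed

lemma upt_split_adjacent:
  assumes "j \<le> a" "Suc a \<le> n"
  shows "[j..<Suc n] = [j..<a] @ a # Suc a # [Suc (Suc a)..<Suc n]"
proof -
  have "[j..<Suc n] = [j..<a] @ [a..<a + (Suc n - a)]"
    using upt_add_eq_append[OF assms(1), of "Suc n - a"] assms by simp
  also have "a + (Suc n - a) = Suc n" using assms by simp
  also have "[a..<Suc n] = a # Suc a # [Suc (Suc a)..<Suc n]"
    using assms by (simp add: upt_conv_Cons)
  finally show ?thesis .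
qed

lemma poly_swap_complete_hom_upt:
  assumes "a < n" "j \<noteq> Suc a"
  shows "poly_swap a (complete_hom k [j..<Suc n]) = complete_hom k [j..<Suc n]"
proof (cases "j \<le> a")
  case True
  then have split: "[j..<Suc n] = [j..<a] @ a # Suc a # [Suc (Suc a)..<Suc n]"
    using assms by (intro upt_split_adjacent) auto
  have "map (adj_swap a) [j..<a] = [j..<a]"
    "map (adj_swap a) [Suc (Suc a)..<Suc n] = [Suc (Suc a)..<Suc n]"
    by (rule map_adj_swap_id; auto)+
  then show ?thesis
    unfolding poly_swap_complete_hom split using complete_hom_swap_mid by (simp add: adj_swap_def)
next
  case False
  then have "map (adj_swap a) [j..<Suc n] = [j..<Suc n]"
    using assms by (intro map_adj_swap_id) auto
  then show ?thesis by (simp add: poly_swap_complete_hom)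
qed

lemma swap_coeffs_S0_coeff:
  assumes "1 \<le> a" "a < n"
  shows "swap_coeffs a (S0_coeff i n) j = S0_coeff i n j"
proof (cases "j = Suc a \<and> i \<le> a")
  case True
  then have j: "j = Suc a" and i: "i \<le> a" by simp_all
  define k where "k = a - i"
  define Z where "Z = [Suc (Suc a)..<Suc n]"
  have fixed: "map (adj_swap a) Z = Z" by (rule map_adj_swap_id) (auto simp: Z_def)
  have "[Suc a..<Suc n] = Suc a # Z" "[a..<Suc n] = a # Suc a # Z"
    using assms by (simp_all add: Z_def upt_conv_Cons)
  then have at_Suc: "S0_coeff i n (Suc a) = (-1) ^ Suc k * complete_hom (Suc k) (Suc a # Z)"
    and at_a: "S0_coeff i n a = (-1) ^ k * complete_hom k (a # Suc a # Z)"
    using i assms by (simp_all add: S0_coeff_def k_def Suc_diff_le)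
  have "swap_coeffs a (S0_coeff i n) j = (-1) ^ Suc k *
      (complete_hom (Suc k) (a # Z) - (pvar a - pvar (Suc a)) * complete_hom k (a # Suc a # Z))"
    unfolding swap_coeffs_def j at_Suc at_a
    by (simp add: poly_swap_mult poly_swap_power poly_swap_minus poly_swap_complete_hom fixed
        adj_swap_def complete_hom_swap_head algebra_simps del: complete_hom.simps)
  also have "\<dots> = S0_coeff i n j"
    using complete_hom_diff[of k a Z "Suc a"] by (simp add: j at_Suc algebra_simps del: complete_hom.simps)
  finally show ?thesis .
next
  case False
  then show ?thesis
    using assms poly_swap_complete_hom_upt[of a n j]
    by (auto simp: swap_coeffs_def S0_coeff_def poly_swap_mult poly_swap_power poly_swap_minus)
qed

text \<open>The reduced word of the longest element for N variables ends with the block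
  s_(N-1) ... s_1, whose Demazure operators act first, for s_1, ..., s_(N-1) in turn. The k-th of
  them consumes one factor x_k of x^rho: stair_exp N k is what is left of rho_N after k of these
  steps, and it is symmetric in x_(k+1) and x_(k+2).\<close>

definition stair_exp :: "nat \<Rightarrow> nat \<Rightarrow> (nat \<Rightarrow>\<^sub>0 nat)" where
  "stair_exp N k = (\<Sum>j\<in>{1..<N}. Poly_Mapping.single j (if j \<le> k then N - 1 - j else N - j))"

lemma lookup_sum_single:
  "Poly_Mapping.lookup (\<Sum>j\<in>{1..<(N::nat)}. Poly_Mapping.single j (f j)) x
     = (if 1 \<le> x \<and> x < N then f x else (0::nat))"
  by (simp add: lookup_sum lookup_single when_def)

lemma lookup_stair_exp:
  "Poly_Mapping.lookup (stair_exp N k) x = (if 1 \<le> x \<and> x < N then (if x \<le> k then N - 1 - x else N - x) else 0)"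
  unfolding stair_exp_def by (rule lookup_sum_single)

lemma lookup_rho: "Poly_Mapping.lookup (rho_exp N) x = (if 1 \<le> x \<and> x < N then N - x else 0)"
  unfolding rho_exp_def by (rule lookup_sum_single)

lemma stair_exp_0: "stair_exp N 0 = rho_exp N"
  by (rule poly_mapping_eqI) (simp add: lookup_stair_exp lookup_rho)

lemma stair_exp_last: "1 \<le> N \<Longrightarrow> stair_exp N (N - 1) = rho_exp (N - 1)"
  by (rule poly_mapping_eqI) (auto simp: lookup_stair_exp lookup_rho)

lemma stair_exp_step: "Suc k < N \<Longrightarrow> stair_exp N k = stair_exp N (Suc k) + Poly_Mapping.single (Suc k) 1"
  by (rule poly_mapping_eqI) (auto simp: lookup_stair_exp lookup_add lookup_single when_def)

lemma swap_exp_fixed: "Poly_Mapping.lookup \<alpha> a = Poly_Mapping.lookup \<alpha> (Suc a) \<Longrightarrow> swap_exp a \<alpha> = \<alpha>"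
  by (rule poly_mapping_eqI) (simp add: lookup_swap_exp adj_swap_def)

lemma stair_exp_sym: "Suc k < N \<Longrightarrow> swap_exp (Suc k) (stair_exp N (Suc k)) = stair_exp N (Suc k)"
  by (rule swap_exp_fixed) (simp add: lookup_stair_exp)

definition demazure_block :: "nat \<Rightarrow> R \<Rightarrow> R" where
  "demazure_block k f = foldr demazure (rev [1..<Suc k]) f"

lemma demazure_block_0[simp]: "demazure_block 0 f = f" by (simp add: demazure_block_def)

lemma demazure_block_Suc: "demazure_block (Suc k) f = demazure (Suc k) (demazure_block k f)"
  by (simp add: demazure_block_def)

lemma w0word_Suc: "w0word (Suc m) = w0word m @ rev [1..<Suc m]"
  by (cases m) (simp_all add: w0word_def)

lemma demazure_w0_Suc: "demazure_w0 (Suc m) f = demazure_w0 m (demazure_block m f)"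
  by (simp add: demazure_w0_def w0word_Suc demazure_block_def)

lemma demazure_omega_lin_step:
  assumes "1 \<le> a" "a < n" "demazure_step u a" "poly_swap a q = q"
  shows "demazure a (omega_lin n (\<lambda>j. q * pvar a * u a j)) = omega_lin n (\<lambda>j. q * u (Suc a) j)"
proof (rule demazure_omega_lin)
  fix j
  have "q * pvar a * u a j - swap_coeffs a (\<lambda>j. q * pvar a * u a j) j
      = q * (pvar a * u a j - swap_coeffs a (\<lambda>j. pvar a * u a j) j)"
    using swap_coeffs_mult_inv[OF assms(4), of "\<lambda>j. pvar a * u a j" j]
    by (simp add: mult.assoc right_diff_distrib)
  also have "\<dots> = q * ((pvar a - pvar (Suc a)) * u (Suc a) j)"
    using assms(3) by (simp add: demazure_step_def)
  finally show "(pvar a - pvar (Suc a)) * (q * u (Suc a) j)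
      = q * pvar a * u a j - swap_coeffs a (\<lambda>j. q * pvar a * u a j) j"
    by (simp add: mult_ac)
qed (use assms in auto)

lemma demazure_block_omega_lin:
  assumes "N \<le> n" and step: "\<And>m. 1 \<le> m \<Longrightarrow> m < N \<Longrightarrow> demazure_step u m" and "k < N"
  shows "demazure_block k (omega_lin n (\<lambda>j. frag_of (stair_exp N 0) * u 1 j))
       = omega_lin n (\<lambda>j. frag_of (stair_exp N k) * u (Suc k) j)"
  using assms(3)
proof (induction k)
  case (Suc k)
  define q where "q = (frag_of (stair_exp N (Suc k)) :: zpoly)"
  have "frag_of (stair_exp N k) = q * pvar (Suc k)"
    using stair_exp_step[OF Suc.prems] by (simp add: q_def pvar_def mult_single)
  moreover have "poly_swap (Suc k) q = q" using stair_exp_sym[OF Suc.prems] by (simp add: q_def)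
  ultimately show ?case
    using Suc assms(1) step[of "Suc k"]
    by (simp add: demazure_block_Suc demazure_omega_lin_step q_def)
qed simp

lemma demazure_step_invariant:
  assumes "\<And>j. swap_coeffs m t j = t j"
  shows "demazure_step (\<lambda>_. t) m"
  unfolding demazure_step_def using assms by (simp add: swap_coeffs_pvar algebra_simps)

lemma demazure_w0_rho_invariant:
  assumes inv: "\<And>a j. 1 \<le> a \<Longrightarrow> a < n \<Longrightarrow> swap_coeffs a t j = t j" and "M < n"
  shows "demazure_w0 M (omega_lin n (\<lambda>j. frag_of (rho_exp M) * t j)) = omega_lin n t"
  using assms(2)
proof (induction M)
  case 0
  have "rho_exp 0 = 0" by (simp add: rho_exp_def)
  then show ?case by (simp add: demazure_w0_def w0word_def)
next
  case (Suc M)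
  have "demazure_block M (omega_lin n (\<lambda>j. frag_of (rho_exp (Suc M)) * t j))
      = omega_lin n (\<lambda>j. frag_of (rho_exp M) * t j)"
    using demazure_block_omega_lin[of "Suc M" n "\<lambda>_. t" M] Suc.prems inv demazure_step_invariant
      stair_exp_0[of "Suc M"] stair_exp_last[of "Suc M"] by simp
  then show ?case using Suc by (simp add: demazure_w0_Suc)
qed

lemma S0_omega_lin:
  assumes "i \<in> {1..n}"
  shows "S0 n i = omega_lin n (S0_coeff i n)"
proof -
  obtain m where n: "n = Suc m" using assms by (cases n) auto
  define start where "start = omega_lin n (\<lambda>j. frag_of (stair_exp n 0) * S0_coeff i 1 j)"
  have "mulR (of_poly (frag_of (stair_exp n 0) * S0_coeff i 1 j)) (omv j)
      = (if j = i then mulR (of_poly (frag_of (rho_exp n))) (omv j) else 0)" for j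
    using assms by (auto simp: S0_coeff_def stair_exp_0)
  then have "start = mulR (of_poly (frag_of (rho_exp n))) (omv i)"
    unfolding start_def omega_lin_def using assms by simp
  then have "S0 n i = demazure_w0 m (demazure_block m start)"
    by (simp add: S0_def n demazure_w0_Suc omv_def mulR_frag_of monmul_def)
  also have "demazure_block m start = omega_lin n (\<lambda>j. frag_of (rho_exp m) * S0_coeff i n j)"
    using demazure_block_omega_lin[of n n "S0_coeff i" m] demazure_step_S0_coeff stair_exp_last[of n]
    by (simp add: start_def n)
  also have "demazure_w0 m \<dots> = omega_lin n (S0_coeff i n)"
    using demazure_w0_rho_invariant[of n "S0_coeff i n" m] swap_coeffs_S0_coeff n by simp
  finally show ?thesis .
qed

text \<open>Extending S_(0,j) by omega_j outside 1..n makes every factor odd, so that the lemmas on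
  ordered products apply to S0set without side conditions.\<close>

definition S0_ext :: "nat \<Rightarrow> nat \<Rightarrow> R" where
  "S0_ext n j = (if j \<in> {1..n} then S0 n j else omv j)"

lemma omega_linear_S0_ext: "omega_linear (S0_ext n j)"
  by (simp add: S0_ext_def S0_omega_lin omega_linear_omega_lin omega_linear_omv)

lemma omega_finite_S0_ext: "omega_finite (S0_ext n j)"
  by (rule omega_finite_omega_linear[OF omega_linear_S0_ext])

lemma omega_in_S0_ext: "j \<in> {1..n} \<Longrightarrow> omega_in n (S0_ext n j)"
  by (simp add: S0_ext_def S0_omega_lin omega_in_omega_lin)

lemma S0set_ordered_prod: "I \<subseteq> {1..n} \<Longrightarrow> S0set n I = ordered_prod (S0_ext n) I"
  unfolding S0set_def ordered_prod_def[symmetric]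
  by (rule ordered_prod_cong) (auto intro: finite_subset simp: S0_ext_def)

lemma S0set_insert_min:
  assumes "b \<in> {1..n}" "A \<subseteq> {1..n}" "\<forall>t\<in>A. b < t"
  shows "S0set n (insert b A) = mulR (S0 n b) (S0set n A)"
proof -
  have "finite A" using assms(2) by (rule finite_subset) simp
  then show ?thesis
    using assms ordered_prod_insert_min[of A b "S0_ext n"] by (simp add: S0set_ordered_prod S0_ext_def)
qed

lemma omega_finite_S0set: "I \<subseteq> {1..n} \<Longrightarrow> omega_finite (S0set n I)"
  by (simp add: S0set_ordered_prod omega_finite_ordered_prod omega_finite_S0_ext)

lemma omega_in_S0set: "I \<subseteq> {1..n} \<Longrightarrow> omega_in n (S0set n I)"
  by (simp add: S0set_ordered_prod omega_in_ordered_prod omega_in_S0_ext subset_iff)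

lemma S0set_mult:
  assumes "I \<subseteq> {1..n}" "J \<subseteq> {1..n}"
  shows "mulR (S0set n I) (S0set n J) =
    (if I \<inter> J = {} then frag_cmul (sgnpair I J) (S0set n (I \<union> J)) else 0)"
proof -
  have f: "finite I" "finite J" using assms finite_subset by auto
  have u: "I \<union> J \<subseteq> {1..n}" using assms by auto
  show ?thesis
    unfolding S0set_ordered_prod[OF assms(1)] S0set_ordered_prod[OF assms(2)] S0set_ordered_prod[OF u]
    by (rule ordered_prod_mult[OF omega_linear_S0_ext f])
qed

lemma mulR_S0_S0set:
  assumes "i \<in> {1..n}" "I \<subseteq> {1..n}"
  shows "mulR (S0 n i) (S0set n I) =
    (if i \<in> I then 0 else frag_cmul ((-1) ^ card {t\<in>I. t < i}) (S0set n (insert i I)))"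
proof -
  have fI: "finite I" using assms finite_subset by auto
  have "S0 n i = S0_ext n i" using assms by (simp add: S0_ext_def)
  then show ?thesis
    using mulR_ordered_prod[of "S0_ext n" I i, OF omega_linear_S0_ext fI] assms by (simp add: S0set_ordered_prod)
qed

lemma act_S0: "1 \<le> a \<Longrightarrow> a < n \<Longrightarrow> i \<in> {1..n} \<Longrightarrow> act a (S0 n i) = S0 n i"
  by (simp add: S0_omega_lin act_omega_lin swap_coeffs_S0_coeff cong: omega_lin_cong)

lemma act_S0set: "1 \<le> a \<Longrightarrow> a < n \<Longrightarrow> I \<subseteq> {1..n} \<Longrightarrow> act a (S0set n I) = S0set n I"
proof -
  assume a: "1 \<le> a" "a < n" and I: "I \<subseteq> {1..n}"
  have fI: "finite I" using I finite_subset by auto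
  have "act a (S0set n I) = ordered_prod (\<lambda>j. act a (S0_ext n j)) I"
    by (simp add: S0set_ordered_prod[OF I] act_ordered_prod omega_finite_S0_ext)
  also have "\<dots> = ordered_prod (S0_ext n) I"
    by (rule ordered_prod_cong[OF fI]) (use I a in \<open>auto simp: S0_ext_def act_S0\<close>)
  finally show ?thesis using S0set_ordered_prod[OF I] by simp
qed

section \<open>Leading terms and linear independence\<close>

definition omega_dominated :: "R \<Rightarrow> nat set \<Rightarrow> bool" where
  "omega_dominated f A \<longleftrightarrow> (\<forall>K. omega_coeff K f \<noteq> 0 \<longrightarrow> K = A \<or> \<Sum>A < \<Sum>K)"

definition leading_omega :: "R \<Rightarrow> nat set \<Rightarrow> int \<Rightarrow> bool" where
  "leading_omega f A u \<longleftrightarrow> omega_dominated f A \<and> omega_coeff A f = of_int u \<and> (u = 1 \<or> u = -1)"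

lemma leading_omega_oneR: "leading_omega oneR {} 1"
  by (simp add: leading_omega_def omega_dominated_def omega_coeff_oneR)

lemma omega_dominated_mulR:
  assumes "omega_in n f" "omega_in n g" "omega_dominated f A" "omega_dominated g B"
    and "A \<inter> B = {}" "finite A" "finite B"
  shows "omega_dominated (mulR f g) (A \<union> B)"
  unfolding omega_dominated_def
proof (intro allI impI)
  fix K assume "omega_coeff K (mulR f g) \<noteq> 0"
  then obtain S T where ST: "S \<inter> T = {}" "S \<union> T = K" "omega_coeff S f \<noteq> 0" "omega_coeff T g \<noteq> 0"
    by (rule omega_coeff_mulR_nonzero)
  then have "finite S" "finite T"
    using assms(1,2) by (meson finite_atLeastAtMost finite_subset omega_coeff_omega_in)+
  then have "\<Sum>K = \<Sum>S + \<Sum>T" "\<Sum>(A \<union> B) = \<Sum>A + \<Sum>B"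
    using ST assms(5-7) by (auto simp: sum.union_disjoint)
  moreover have "S = A \<or> \<Sum>A < \<Sum>S" "T = B \<or> \<Sum>B < \<Sum>T"
    using ST assms(3,4) by (auto simp: omega_dominated_def)
  ultimately show "K = A \<union> B \<or> \<Sum>(A \<union> B) < \<Sum>K" using ST by auto
qed

lemma omega_coeff_mulR_dominated:
  assumes "omega_in n f" "omega_in n g" "omega_dominated f A" "omega_dominated g B"
    and "A \<inter> B = {}" "A \<subseteq> {1..n}" "B \<subseteq> {1..n}"
  shows "omega_coeff (A \<union> B) (mulR f g) = of_int (sgnpair A B) * (omega_coeff A f * omega_coeff B g)"
proof -
  let ?P = "Pow {1..n}"
  define F where "F S T = (if S \<inter> T = {} \<and> S \<union> T = A \<union> B
      then of_int (sgnpair S T) * (omega_coeff S f * omega_coeff T g) else (0::zpoly))" for S T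
  have only_AB: "S = A \<and> T = B" if "F S T \<noteq> 0" "S \<in> ?P" "T \<in> ?P" for S T
  proof -
    from that have ST: "S \<inter> T = {}" "S \<union> T = A \<union> B" "omega_coeff S f \<noteq> 0" "omega_coeff T g \<noteq> 0"
      by (auto simp: F_def split: if_splits)
    have "finite S" "finite T" "finite A" "finite B"
      using that assms(6,7) by (auto intro: finite_subset)
    then have "\<Sum>S + \<Sum>T = \<Sum>A + \<Sum>B" using ST assms(5) by (metis sum.union_disjoint)
    moreover have "S = A \<or> \<Sum>A < \<Sum>S" "T = B \<or> \<Sum>B < \<Sum>T"
      using ST assms(3,4) by (auto simp: omega_dominated_def)
    ultimately show ?thesis by auto
  qed
  have "omega_coeff (A \<union> B) (mulR f g) = (\<Sum>S\<in>?P. \<Sum>T\<in>?P. F S T)"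
    unfolding F_def using assms(1,2) by (intro omega_coeff_mulR) (auto simp: omega_in_def)
  also have "\<dots> = (\<Sum>(S, T)\<in>?P \<times> ?P. F S T)" by (rule sum.cartesian_product)
  also have "\<dots> = F A B"
    by (rule trans[OF sum_eq_single[of _ "(A, B)"]]) (use only_AB assms(6,7) in auto)
  finally show ?thesis using assms(5) by (simp add: F_def)
qed

lemma leading_omega_mulR:
  assumes "omega_in n f" "omega_in n g" "leading_omega f A u" "leading_omega g B v"
    and "A \<inter> B = {}" "A \<subseteq> {1..n}" "B \<subseteq> {1..n}"
  shows "leading_omega (mulR f g) (A \<union> B) (sgnpair A B * u * v)"
  using assms omega_dominated_mulR[of n f g A B] omega_coeff_mulR_dominated[of n f g A B]
    finite_subset[OF assms(6)] finite_subset[OF assms(7)] sgnpair_cases[of A B]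
  by (auto simp: leading_omega_def)

lemma omega_coeff_sum_dominated:
  assumes "finite \<I>" "I0 \<in> \<I>"
    and dom: "\<And>I. I \<in> \<I> \<Longrightarrow> omega_dominated (b I) I"
    and min: "\<And>I. I \<in> \<I> \<Longrightarrow> p I \<noteq> 0 \<Longrightarrow> \<Sum>I0 \<le> \<Sum>I"
  shows "omega_coeff I0 (\<Sum>I\<in>\<I>. mulR (of_poly (p I)) (b I)) = p I0 * omega_coeff I0 (b I0)"
proof -
  have "p I * omega_coeff I0 (b I) = 0" if "I \<in> \<I>" "I \<noteq> I0" for I
  proof (rule ccontr)
    assume "p I * omega_coeff I0 (b I) \<noteq> 0"
    then have "\<Sum>I0 \<le> \<Sum>I" "I0 = I \<or> \<Sum>I < \<Sum>I0"
      using that min dom[of I] by (auto simp: omega_dominated_def)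
    then show False using that(2) by auto
  qed
  then show ?thesis
    using assms(1,2) by (simp add: omega_coeff_sum omega_coeff_of_poly_mult sum_eq_single)
qed

lemma leading_omega_independent:
  assumes "finite \<I>"
    and lead: "\<And>I. I \<in> \<I> \<Longrightarrow> \<exists>u. leading_omega (b I) I u"
    and ev: "\<And>I. I \<in> \<I> \<Longrightarrow> omega_free (c I)"
    and zero: "(\<Sum>I\<in>\<I>. mulR (c I) (b I)) = 0"
  shows "\<forall>I\<in>\<I>. c I = 0"
proof (rule ccontr)
  define p where "p I = omega_coeff {} (c I)" for I
  have c: "c I = of_poly (p I)" if "I \<in> \<I>" for I
    unfolding p_def using ev[OF that] by (rule omega_free_eq_of_poly)
  assume "\<not> (\<forall>I\<in>\<I>. c I = 0)"
  then obtain I1 where "I1 \<in> \<I> \<and> p I1 \<noteq> 0" using c by fastforce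
  then obtain I0 where I0: "I0 \<in> \<I>" "p I0 \<noteq> 0"
      and min: "\<And>I. I \<in> \<I> \<Longrightarrow> p I \<noteq> 0 \<Longrightarrow> \<Sum>I0 \<le> \<Sum>I"
    using ex_has_least_nat[of "\<lambda>I. I \<in> \<I> \<and> p I \<noteq> 0" I1 "\<lambda>I. \<Sum>I"] by blast
  obtain u where u: "leading_omega (b I0) I0 u" using lead I0(1) by blast
  have "0 = omega_coeff I0 (\<Sum>I\<in>\<I>. mulR (of_poly (p I)) (b I))"
    using zero c by (simp cong: sum.cong)
  also have "\<dots> = p I0 * omega_coeff I0 (b I0)"
    using assms(1) I0(1) lead min by (intro omega_coeff_sum_dominated) (auto simp: leading_omega_def)
  finally show False using u I0(2) by (auto simp: leading_omega_def)
qed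

lemma leading_omega_S0:
  assumes "i \<in> {1..n}"
  shows "leading_omega (S0 n i) {i} 1"
  unfolding leading_omega_def omega_dominated_def
proof (intro conjI allI impI)
  fix K assume "omega_coeff K (S0 n i) \<noteq> 0"
  then have nz: "omega_coeff K (omega_lin n (S0_coeff i n)) \<noteq> 0" using S0_omega_lin[OF assms] by simp
  then obtain j where j: "j \<in> {1..n}" "K = {j}" using omega_coeff_omega_lin_not_singleton by blast
  then have "S0_coeff i n j \<noteq> 0" using nz omega_coeff_singleton_omega_lin by simp
  then have "i \<le> j" by (auto simp: S0_coeff_def split: if_splits)
  then show "K = {i} \<or> \<Sum>{i} < \<Sum>K" using j by auto
next
  show "omega_coeff {i} (S0 n i) = of_int 1"
    using assms by (simp add: S0_omega_lin omega_coeff_singleton_omega_lin S0_coeff_def)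
qed simp

lemma leading_omega_S0set:
  assumes "I \<subseteq> {1..n}"
  shows "\<exists>u. leading_omega (S0set n I) I u"
proof -
  have "finite I" using assms finite_subset by auto
  then show ?thesis using assms
  proof (induction I rule: finite_linorder_min_induct)
    case empty
    then show ?case using leading_omega_oneR by (auto simp: S0set_def)
  next
    case (insert b A)
    then obtain u where u: "leading_omega (S0set n A) A u" by auto
    have b: "b \<in> {1..n}" using insert by auto
    have e: "S0set n (insert b A) = mulR (S0 n b) (S0set n A)"
      using insert by (intro S0set_insert_min) auto
    have "leading_omega (mulR (S0 n b) (S0set n A)) ({b} \<union> A) (sgnpair {b} A * 1 * u)"
      using insert b by (intro leading_omega_mulR[of n] leading_omega_S0 u)
        (auto simp: S0_omega_lin omega_in_omega_lin omega_in_S0set)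
    then show ?case using e by auto
  qed
qed

lemma S0set_independent:
  assumes "\<And>I. I \<in> Pow {1..n} \<Longrightarrow> omega_free (c I)"
    and "(\<Sum>I\<in>Pow {1..n}. mulR (c I) (S0set n I)) = 0"
  shows "\<forall>I\<in>Pow {1..n}. c I = 0"
  using assms leading_omega_S0set by (intro leading_omega_independent[where b = "S0set n"]) auto

section \<open>Spanning\<close>

definition in_span :: "nat \<Rightarrow> R \<Rightarrow> bool" where
  "in_span n g \<longleftrightarrow> (\<exists>c. (\<forall>I. omega_free (c I)) \<and> g = (\<Sum>I\<in>Pow {1..n}. mulR (c I) (S0set n I)))"

lemma in_span_0: "in_span n 0"
  unfolding in_span_def by (rule exI[of _ "\<lambda>_. 0"]) simp

lemma in_span_add: "in_span n f \<Longrightarrow> in_span n g \<Longrightarrow> in_span n (f + g)"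
  unfolding in_span_def
proof (elim exE conjE)
  fix c d assume "\<forall>I. omega_free (c I)" "f = (\<Sum>I\<in>Pow {1..n}. mulR (c I) (S0set n I))"
    "\<forall>I. omega_free (d I)" "g = (\<Sum>I\<in>Pow {1..n}. mulR (d I) (S0set n I))"
  then show "\<exists>e. (\<forall>I. omega_free (e I)) \<and> f + g = (\<Sum>I\<in>Pow {1..n}. mulR (e I) (S0set n I))"
    by (intro exI[of _ "\<lambda>I. c I + d I"]) (simp add: omega_free_add mulR_add_left sum.distrib)
qed

lemma in_span_diff: "in_span n f \<Longrightarrow> in_span n g \<Longrightarrow> in_span n (f - g)"
  unfolding in_span_def
proof (elim exE conjE)
  fix c d assume "\<forall>I. omega_free (c I)" "f = (\<Sum>I\<in>Pow {1..n}. mulR (c I) (S0set n I))"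
    "\<forall>I. omega_free (d I)" "g = (\<Sum>I\<in>Pow {1..n}. mulR (d I) (S0set n I))"
  then show "\<exists>e. (\<forall>I. omega_free (e I)) \<and> f - g = (\<Sum>I\<in>Pow {1..n}. mulR (e I) (S0set n I))"
    by (intro exI[of _ "\<lambda>I. c I - d I"]) (simp add: omega_free_diff mulR_diff_left sum_subtractf)
qed

lemma in_span_sum: "finite A \<Longrightarrow> (\<And>a. a \<in> A \<Longrightarrow> in_span n (f a)) \<Longrightarrow> in_span n (\<Sum>a\<in>A. f a)"
  by (induction A rule: finite_induct) (auto intro: in_span_add in_span_0)

lemma in_span_cmul: "in_span n g \<Longrightarrow> in_span n (frag_cmul k g)"
  unfolding in_span_def
proof (elim exE conjE)
  fix c assume "\<forall>I. omega_free (c I)" "g = (\<Sum>I\<in>Pow {1..n}. mulR (c I) (S0set n I))"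
  then show "\<exists>e. (\<forall>I. omega_free (e I)) \<and> frag_cmul k g = (\<Sum>I\<in>Pow {1..n}. mulR (e I) (S0set n I))"
    by (intro exI[of _ "\<lambda>I. frag_cmul k (c I)"]) (simp add: omega_free_cmul mulR_cmul_left frag_cmul_sum)
qed

lemma in_span_mulR_omega_free: "omega_free e \<Longrightarrow> in_span n g \<Longrightarrow> in_span n (mulR e g)"
  unfolding in_span_def
proof (elim exE conjE)
  fix c assume ee: "omega_free e"
    and c: "\<forall>I. omega_free (c I)" "g = (\<Sum>I\<in>Pow {1..n}. mulR (c I) (S0set n I))"
  have "mulR e g = (\<Sum>I\<in>Pow {1..n}. mulR (mulR e (c I)) (S0set n I))"
    unfolding c(2) mulR_sum_right[OF finite_Pow_atLeastAtMost]
    by (intro sum.cong refl) (simp add: mulR_assoc omega_finite_omega_free ee c omega_finite_S0set)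
  then show "\<exists>d. (\<forall>I. omega_free (d I)) \<and> mulR e g = (\<Sum>I\<in>Pow {1..n}. mulR (d I) (S0set n I))"
    using ee c by (intro exI[of _ "\<lambda>I. mulR e (c I)"]) (simp add: omega_free_mulR)
qed

lemma in_span_S0set: "J \<subseteq> {1..n} \<Longrightarrow> in_span n (S0set n J)"
  unfolding in_span_def
proof (intro exI[of _ "\<lambda>I. if I = J then oneR else 0"] conjI allI)
  fix I show "omega_free (if I = J then oneR else 0)" by (simp add: omega_free_def oneR_def)
next
  have pt: "mulR (if I = J then oneR else 0) (S0set n I) = (if I = J then S0set n J else 0)" for I by simp
  assume "J \<subseteq> {1..n}"
  then show "S0set n J = (\<Sum>I\<in>Pow {1..n}. mulR (if I = J then oneR else 0) (S0set n I))"
    unfolding pt by simp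
qed

lemma in_span_mulR_S0_S0set:
  assumes "i \<in> {1..n}" "I \<subseteq> {1..n}"
  shows "in_span n (mulR (S0 n i) (S0set n I))"
proof (cases "i \<in> I")
  case False
  have "in_span n (S0set n (insert i I))" using assms by (intro in_span_S0set) auto
  then show ?thesis using mulR_S0_S0set[OF assms] False by (simp add: in_span_cmul)
qed (use mulR_S0_S0set[OF assms] in \<open>simp add: in_span_0\<close>)

lemma in_span_mulR_S0:
  assumes "i \<in> {1..n}" "in_span n g"
  shows "in_span n (mulR (S0 n i) g)"
proof -
  obtain c where c: "\<forall>I. omega_free (c I)" "g = (\<Sum>I\<in>Pow {1..n}. mulR (c I) (S0set n I))"
    using assms(2) by (auto simp: in_span_def)
  have "omega_finite (S0 n i)" using assms by (simp add: S0_omega_lin omega_finite_omega_lin)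
  then have "mulR (S0 n i) g = (\<Sum>I\<in>Pow {1..n}. mulR (c I) (mulR (S0 n i) (S0set n I)))"
    unfolding c(2) using c(1)
    by (simp add: mulR_sum_right mulR_left_commute_omega_free omega_finite_S0set)
  also have "in_span n \<dots>"
    using assms(1) c(1) by (intro in_span_sum in_span_mulR_omega_free in_span_mulR_S0_S0set) auto
  finally show ?thesis .
qed

lemma omv_eq_S0_minus:
  assumes "i \<in> {1..n}"
  shows "omv i = S0 n i - (\<Sum>j\<in>{Suc i..n}. mulR (of_poly (S0_coeff i n j)) (omv j))"
proof -
  have "S0 n i = (\<Sum>j\<in>{i..n}. mulR (of_poly (S0_coeff i n j)) (omv j))"
    unfolding S0_omega_lin[OF assms] omega_lin_def using assms
    by (intro sum.mono_neutral_right) (auto simp: S0_coeff_def)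
  also have "{i..n} = insert i {Suc i..n}" using assms by auto
  finally show ?thesis by (simp add: S0_coeff_def)
qed

lemma in_span_mulR_omv:
  assumes "i \<in> {1..n}" "in_span n g"
  shows "in_span n (mulR (omv i) g)"
  using assms
proof (induction "n - i" arbitrary: i rule: less_induct)
  case less
  obtain c where c: "\<forall>I. omega_free (c I)" "g = (\<Sum>I\<in>Pow {1..n}. mulR (c I) (S0set n I))"
    using less.prems(2) by (auto simp: in_span_def)
  have fg: "omega_finite g" unfolding c(2)
    by (intro omega_finite_sum omega_finite_mulR omega_finite_omega_free omega_finite_S0set) (use c in auto)
  have "mulR (omv i) g
      = mulR (S0 n i) g - (\<Sum>j\<in>{Suc i..n}. mulR (of_poly (S0_coeff i n j)) (mulR (omv j) g))"
    by (subst omv_eq_S0_minus[OF less.prems(1)])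
      (simp add: mulR_diff_left mulR_sum_left mulR_assoc omega_finite_of_poly omega_finite_omv fg)
  also have "in_span n \<dots>"
  proof (rule in_span_diff)
    show "in_span n (mulR (S0 n i) g)" by (rule in_span_mulR_S0[OF less.prems])
    show "in_span n (\<Sum>j\<in>{Suc i..n}. mulR (of_poly (S0_coeff i n j)) (mulR (omv j) g))"
    proof (rule in_span_sum)
      fix j assume j: "j \<in> {Suc i..n}"
      then have "in_span n (mulR (omv j) g)" using less by (intro less.hyps) auto
      then show "in_span n (mulR (of_poly (S0_coeff i n j)) (mulR (omv j) g))"
        by (rule in_span_mulR_omega_free[OF omega_free_of_poly])
    qed simp
  qed
  finally show ?case .
qed

lemma in_span_ordered_prod_omv: "S \<subseteq> {1..n} \<Longrightarrow> in_span n (ordered_prod omv S)"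
proof -
  assume S: "S \<subseteq> {1..n}"
  then have "finite S" using finite_subset by auto
  then show ?thesis using S
  proof (induction S rule: finite_linorder_min_induct)
    case empty then show ?case using in_span_S0set[of "{}" n] by (simp add: S0set_def)
  next
    case (insert b A)
    then have "ordered_prod omv (insert b A) = mulR (omv b) (ordered_prod omv A)"
      by (intro ordered_prod_insert_min) auto
    then show ?case using insert by (auto intro: in_span_mulR_omv)
  qed
qed

lemma in_span_omega_in: "omega_in n f \<Longrightarrow> in_span n f"
proof -
  assume "omega_in n f"
  then have "Poly_Mapping.keys f \<subseteq> {k. snd k \<subseteq> {1..n}}" by (auto simp: omega_in_def)
  then show ?thesis
  proof (induction f rule: frag_induction)
    case zero then show ?case by (rule in_span_0)
  next
    case (diff a b) then show ?case by (rule in_span_diff)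
  next
    case (one x)
    obtain \<alpha> S where x: "x = (\<alpha>, S)" by (cases x)
    have S: "S \<subseteq> {1..n}" using one x by simp
    then have fS: "finite S" using finite_subset by auto
    have eq: "frag_of x = mulR (of_poly (frag_of \<alpha>)) (ordered_prod omv S)"
      using fS by (simp add: x ordered_prod_omv mulR_frag_of monmul_def)
    show ?case
      unfolding eq by (rule in_span_mulR_omega_free[OF omega_free_of_poly in_span_ordered_prod_omv[OF S]])
  qed
qed

definition vars_in :: "nat \<Rightarrow> zpoly \<Rightarrow> bool" where
  "vars_in n p \<longleftrightarrow> (\<forall>\<alpha>\<in>Poly_Mapping.keys p. Poly_Mapping.keys \<alpha> \<subseteq> {1..n})"

lemma vars_in_add: "vars_in n p \<Longrightarrow> vars_in n q \<Longrightarrow> vars_in n (p + q)"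
  unfolding vars_in_def using keys_add[of p q] by blast

lemma vars_in_minus: "vars_in n p \<Longrightarrow> vars_in n (- p)"
  unfolding vars_in_def by simp

lemma vars_in_0[simp]: "vars_in n 0" by (simp add: vars_in_def)

lemma vars_in_1[simp]: "vars_in n 1" by (simp add: vars_in_def)

lemma vars_in_mult:
  assumes "vars_in n p" "vars_in n q" shows "vars_in n (p * q)"
  unfolding vars_in_def
proof
  fix \<gamma> assume "\<gamma> \<in> Poly_Mapping.keys (p * q)"
  then obtain a b where ab: "a \<in> Poly_Mapping.keys p" "b \<in> Poly_Mapping.keys q" "\<gamma> = a + b"
    using keys_mult[of p q] by blast
  have "Poly_Mapping.keys (a + b) \<subseteq> Poly_Mapping.keys a \<union> Poly_Mapping.keys b" by (rule keys_add)
  then show "Poly_Mapping.keys \<gamma> \<subseteq> {1..n}" using ab assms by (auto simp: vars_in_def)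
qed

lemma vars_in_pvar: "j \<in> {1..n} \<Longrightarrow> vars_in n (pvar j)" by (simp add: vars_in_def pvar_def)

lemma vars_in_power: "vars_in n p \<Longrightarrow> vars_in n (p ^ k)" by (induction k) (auto intro: vars_in_mult)

lemma vars_in_complete_hom: "(\<And>v. v \<in> set L \<Longrightarrow> v \<in> {1..n}) \<Longrightarrow> vars_in n (complete_hom k L)"
  by (induction k L rule: complete_hom.induct) (auto intro!: vars_in_add vars_in_mult vars_in_pvar)

lemma vars_in_S0_coeff: "1 \<le> i \<Longrightarrow> vars_in n (S0_coeff i n j)"
  unfolding S0_coeff_def by (auto intro!: vars_in_mult vars_in_power vars_in_minus vars_in_complete_hom)

lemma Rn_add: "f \<in> Rn n \<Longrightarrow> g \<in> Rn n \<Longrightarrow> f + g \<in> Rn n"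
  unfolding Rn_def using keys_add[of f g] by blast

lemma Rn_0[simp]: "0 \<in> Rn n" by (simp add: Rn_def)

lemma Rn_oneR[simp]: "oneR \<in> Rn n" by (simp add: Rn_def oneR_def)

lemma Rn_sum: "(\<And>i. i \<in> A \<Longrightarrow> f i \<in> Rn n) \<Longrightarrow> (\<Sum>i\<in>A. f i) \<in> Rn n"
  by (induction A rule: infinite_finite_induct) (auto intro: Rn_add)

lemma Rn_mulR: "f \<in> Rn n \<Longrightarrow> g \<in> Rn n \<Longrightarrow> mulR f g \<in> Rn n"
  unfolding Rn_def by (fastforce dest!: keys_mulR simp: keys_add_nat)

lemma Rn_of_poly: "vars_in n p \<Longrightarrow> of_poly p \<in> Rn n"
  unfolding Rn_def vars_in_def mem_Collect_eq
proof
  fix k assume p: "\<forall>\<alpha>\<in>Poly_Mapping.keys p. Poly_Mapping.keys \<alpha> \<subseteq> {1..n}"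
    and k: "k \<in> Poly_Mapping.keys (of_poly p)"
  obtain \<alpha> S where kk: "k = (\<alpha>, S)" by (cases k)
  have "Poly_Mapping.lookup (of_poly p) (\<alpha>, S) \<noteq> 0" using k kk by (simp add: in_keys_iff)
  then have "S = {}" "\<alpha> \<in> Poly_Mapping.keys p" by (auto simp: lookup_of_poly in_keys_iff split: if_splits)
  then show "Poly_Mapping.keys (fst k) \<subseteq> {1..n} \<and> snd k \<subseteq> {1..n}" using p kk by auto
qed

lemma Rn_omv: "j \<in> {1..n} \<Longrightarrow> omv j \<in> Rn n" by (simp add: Rn_def omv_def)

lemma Rn_omega_lin: "(\<And>j. j \<in> {1..n} \<Longrightarrow> vars_in n (c j)) \<Longrightarrow> omega_lin n c \<in> Rn n"
  unfolding omega_lin_def by (auto intro!: Rn_sum Rn_mulR Rn_of_poly Rn_omv)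

lemma Rn_S0: "i \<in> {1..n} \<Longrightarrow> S0 n i \<in> Rn n"
  by (simp add: S0_omega_lin Rn_omega_lin vars_in_S0_coeff)

lemma Rn_ordered_prod: "(\<And>j. j \<in> I \<Longrightarrow> y j \<in> Rn n) \<Longrightarrow> ordered_prod y I \<in> Rn n"
proof -
  assume a: "\<And>j. j \<in> I \<Longrightarrow> y j \<in> Rn n"
  have "\<forall>x\<in>set xs. x \<in> I \<Longrightarrow> foldr mulR (map y xs) oneR \<in> Rn n" for xs
    using a by (induction xs) (auto intro: Rn_mulR)
  then show ?thesis unfolding ordered_prod_def by (cases "finite I") auto
qed

lemma Rn_S0set: "I \<subseteq> {1..n} \<Longrightarrow> S0set n I \<in> Rn n"
  by (simp add: S0set_ordered_prod Rn_ordered_prod S0_ext_def Rn_S0 subset_iff)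

definition mons_in :: "nat \<Rightarrow> mon set" where
  "mons_in n = {k. Poly_Mapping.keys (fst k) \<subseteq> {1..n} \<and> snd k \<subseteq> {1..n}}"

text \<open>The spanning argument yields coefficients in all variables x_1, x_2, ...; for elements of
  Rn n they can be cut down to x_1, ..., x_n since restricting to monomials in these variables is
  a ring homomorphism fixing Rn n.\<close>

definition restrict_vars :: "nat \<Rightarrow> R \<Rightarrow> R" where
  "restrict_vars n f = frag_extend (\<lambda>k. if k \<in> mons_in n then frag_of k else 0) f"

lemma restrict_vars_add: "restrict_vars n (f + g) = restrict_vars n f + restrict_vars n g"
  by (simp add: restrict_vars_def frag_extend_add)

lemma restrict_vars_diff: "restrict_vars n (f - g) = restrict_vars n f - restrict_vars n g"
  by (simp add: restrict_vars_def frag_extend_diff)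

lemma restrict_vars_0[simp]: "restrict_vars n 0 = 0" by (simp add: restrict_vars_def)

lemma restrict_vars_sum: "finite A \<Longrightarrow> restrict_vars n (\<Sum>i\<in>A. f i) = (\<Sum>i\<in>A. restrict_vars n (f i))"
  by (induction A rule: finite_induct) (simp_all add: restrict_vars_add)

lemma restrict_vars_id: "f \<in> Rn n \<Longrightarrow> restrict_vars n f = f"
proof -
  assume "f \<in> Rn n"
  then have "Poly_Mapping.keys f \<subseteq> mons_in n" by (auto simp: Rn_def mons_in_def)
  then show ?thesis
    by (induction f rule: frag_induction) (simp_all add: restrict_vars_def frag_extend_diff)
qed

lemma restrict_vars_mulR: "restrict_vars n (mulR f g) = mulR (restrict_vars n f) (restrict_vars n g)"
proof (induction f rule: frag_induction[OF subset_UNIV])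
  case 1 then show ?case by (simp add: restrict_vars_def)
next
  case (3 a b) then show ?case by (simp add: mulR_diff_left restrict_vars_diff)
next
  case (2 x)
  show ?case
  proof (induction g rule: frag_induction[OF subset_UNIV])
    case 1 then show ?case by (simp add: restrict_vars_def)
  next
    case (3 a b) then show ?case by (simp add: mulR_diff_right restrict_vars_diff)
  next
    case (2 y)
    show ?case
    proof (cases "snd x \<inter> snd y = {}")
      case True
      have "(fst x + fst y, snd x \<union> snd y) \<in> mons_in n \<longleftrightarrow> x \<in> mons_in n \<and> y \<in> mons_in n"
        by (auto simp: mons_in_def keys_add_nat)
      then show ?thesis using True
        by (simp add: restrict_vars_def mulR_frag_of monmul_def frag_extend_cmul)
    next
      case False
      then show ?thesis by (simp add: restrict_vars_def mulR_frag_of monmul_def)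
    qed
  qed
qed

lemma keys_restrict_vars: "Poly_Mapping.keys (restrict_vars n f) \<subseteq> Poly_Mapping.keys f \<inter> mons_in n"
proof -
  have "Poly_Mapping.keys (restrict_vars n f)
      \<subseteq> (\<Union>k\<in>Poly_Mapping.keys f. Poly_Mapping.keys (if k \<in> mons_in n then frag_of k else 0))"
    unfolding restrict_vars_def by (rule keys_frag_extend)
  then show ?thesis by (auto split: if_splits)
qed

lemma restrict_vars_Rn: "restrict_vars n f \<in> Rn n"
  using keys_restrict_vars[of n f] by (auto simp: Rn_def mons_in_def)

lemma restrict_vars_omega_free: "omega_free f \<Longrightarrow> omega_free (restrict_vars n f)"
  using keys_restrict_vars[of n f] by (auto simp: omega_free_def)

section \<open>Bidegrees\<close>

definition tdeg :: "(nat \<Rightarrow>\<^sub>0 nat) \<Rightarrow> nat" where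
  "tdeg \<alpha> = sum (Poly_Mapping.lookup \<alpha>) (Poly_Mapping.keys \<alpha>)"

lemma tdeg_add: "tdeg (\<alpha> + \<beta>) = tdeg \<alpha> + tdeg \<beta>"
  unfolding tdeg_def using setsum_keys_plus_distrib[of "\<lambda>k x. x" \<alpha> \<beta>] by (simp add: lookup_add)

lemma tdeg_0[simp]: "tdeg 0 = 0" by (simp add: tdeg_def)

lemma tdeg_single[simp]: "tdeg (Poly_Mapping.single j k) = k" by (simp add: tdeg_def)

lemma bideg_eq: "bideg k = (2 * int (tdeg (fst k)) - 2 * int (\<Sum>(snd k)), 2 * int (card (snd k)))"
  by (simp add: bideg_def tdeg_def)

definition poly_homog :: "nat \<Rightarrow> zpoly \<Rightarrow> bool" where
  "poly_homog m p \<longleftrightarrow> (\<forall>\<alpha>\<in>Poly_Mapping.keys p. tdeg \<alpha> = m)"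

lemma poly_homog_add: "poly_homog m p \<Longrightarrow> poly_homog m q \<Longrightarrow> poly_homog m (p + q)"
  unfolding poly_homog_def using keys_add[of p q] by blast

lemma poly_homog_minus: "poly_homog m p \<Longrightarrow> poly_homog m (- p)" unfolding poly_homog_def by simp

lemma poly_homog_0[simp]: "poly_homog m 0" by (simp add: poly_homog_def)

lemma poly_homog_1[simp]: "poly_homog 0 1" by (simp add: poly_homog_def)

lemma poly_homog_mult:
  assumes "poly_homog m p" "poly_homog m' q" shows "poly_homog (m + m') (p * q)"
  unfolding poly_homog_def
proof
  fix \<gamma> assume "\<gamma> \<in> Poly_Mapping.keys (p * q)"
  then obtain a b where ab: "a \<in> Poly_Mapping.keys p" "b \<in> Poly_Mapping.keys q" "\<gamma> = a + b"
    using keys_mult[of p q] by blast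
  then show "tdeg \<gamma> = m + m'" using assms by (simp add: poly_homog_def tdeg_add)
qed

lemma poly_homog_pvar: "poly_homog 1 (pvar j)" by (simp add: poly_homog_def pvar_def)

lemma poly_homog_power: "poly_homog m p \<Longrightarrow> poly_homog (k * m) (p ^ k)"
  by (induction k) (auto dest: poly_homog_mult)

lemma poly_homog_neg1pow: "poly_homog 0 ((-1) ^ k)"
  using poly_homog_power[of 0 "-1" k] by (simp add: poly_homog_minus)

lemma poly_homog_complete_hom: "poly_homog k (complete_hom k L)"
proof (induction k L rule: complete_hom.induct)
  case (3 k v vs)
  then show ?case using poly_homog_mult[OF poly_homog_pvar[of v] "3.IH"(1)] by (auto intro: poly_homog_add)
qed simp_all

lemma poly_homog_S0_coeff: "i \<le> j \<Longrightarrow> poly_homog (j - i) (S0_coeff i n j)"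
  unfolding S0_coeff_def using poly_homog_mult[OF poly_homog_neg1pow poly_homog_complete_hom] by auto

lemma homR_add: "homR d f \<Longrightarrow> homR d g \<Longrightarrow> homR d (f + g)"
  unfolding homR_def using keys_add[of f g] by blast

lemma homR_0[simp]: "homR d 0" by (simp add: homR_def)

lemma homR_sum: "(\<And>i. i \<in> A \<Longrightarrow> homR d (f i)) \<Longrightarrow> homR d (\<Sum>i\<in>A. f i)"
  by (induction A rule: infinite_finite_induct) (auto intro: homR_add)

lemma homR_mulR:
  assumes "homR (a1, b1) f" "homR (a2, b2) g" "omega_finite f" "omega_finite g"
  shows "homR (a1 + a2, b1 + b2) (mulR f g)"
  unfolding homR_def
proof
  fix k assume "k \<in> Poly_Mapping.keys (mulR f g)"
  then obtain a b where ab: "a \<in> Poly_Mapping.keys f" "b \<in> Poly_Mapping.keys g"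
     "snd a \<inter> snd b = {}" "k = (fst a + fst b, snd a \<union> snd b)"
    using keys_mulR by blast
  have fin: "finite (snd a)" "finite (snd b)" using assms(3,4) ab by (auto simp: omega_finite_def)
  have ba: "bideg a = (a1, b1)" "bideg b = (a2, b2)" using assms(1,2) ab by (auto simp: homR_def)
  have "\<Sum>(snd a \<union> snd b) = \<Sum>(snd a) + \<Sum>(snd b)" using fin ab(3) by (simp add: sum.union_disjoint)
  moreover have "card (snd a \<union> snd b) = card (snd a) + card (snd b)" using fin ab(3) by (simp add: card_Un_disjoint)
  ultimately show "bideg k = (a1 + a2, b1 + b2)" using ba ab(4) by (simp add: bideg_eq tdeg_add algebra_simps)
qed

lemma homR_of_poly: "poly_homog m p \<Longrightarrow> homR (2 * int m, 0) (of_poly p)"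
  unfolding homR_def
proof
  fix k assume p: "poly_homog m p" and k: "k \<in> Poly_Mapping.keys (of_poly p)"
  obtain \<alpha> S where kk: "k = (\<alpha>, S)" by (cases k)
  have "Poly_Mapping.lookup (of_poly p) (\<alpha>, S) \<noteq> 0" using k kk by (simp add: in_keys_iff)
  then have "S = {}" "\<alpha> \<in> Poly_Mapping.keys p" by (auto simp: lookup_of_poly in_keys_iff split: if_splits)
  then show "bideg k = (2 * int m, 0)" using p kk by (simp add: bideg_eq poly_homog_def)
qed

lemma homR_omv: "homR (- 2 * int j, 2) (omv j)"
  by (simp add: homR_def omv_def bideg_eq)

lemma homR_S0: "i \<in> {1..n} \<Longrightarrow> homR (- 2 * int i, 2) (S0 n i)"
  unfolding S0_omega_lin omega_lin_def
proof (intro homR_sum)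
  fix j assume i: "i \<in> {1..n}" and j: "j \<in> {1..n}"
  show "homR (- 2 * int i, 2) (mulR (of_poly (S0_coeff i n j)) (omv j))"
  proof (cases "i \<le> j")
    case True
    have "homR (2 * int (j - i) + - 2 * int j, 0 + 2) (mulR (of_poly (S0_coeff i n j)) (omv j))"
      by (intro homR_mulR homR_of_poly poly_homog_S0_coeff True homR_omv omega_finite_of_poly omega_finite_omv)
    then show ?thesis using True by (simp add: of_nat_diff algebra_simps)
  next
    case False
    then have "S0_coeff i n j = 0" by (simp add: S0_coeff_def)
    then show ?thesis by simp
  qed
qed

lemma homR_oneR: "homR (0, 0) oneR" by (simp add: homR_def oneR_def bideg_eq)

lemma homR_S0set: "I \<subseteq> {1..n} \<Longrightarrow> homR (- 2 * int (\<Sum>I), 2 * int (card I)) (S0set n I)"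
proof -
  assume I: "I \<subseteq> {1..n}"
  then have "finite I" using finite_subset by auto
  then show ?thesis using I
  proof (induction I rule: finite_linorder_min_induct)
    case empty then show ?case using homR_oneR by (simp add: S0set_def)
  next
    case (insert b A)
    have b: "b \<in> {1..n}" and A: "A \<subseteq> {1..n}" using insert by auto
    have bA: "b \<notin> A" using insert by auto
    have e: "S0set n (insert b A) = mulR (S0 n b) (S0set n A)"
      using insert by (intro S0set_insert_min) auto
    have "homR (- 2 * int b + - 2 * int (\<Sum>A), 2 + 2 * int (card A)) (mulR (S0 n b) (S0set n A))"
      using insert A by (intro homR_mulR homR_S0 b omega_finite_S0set) (auto simp: S0_omega_lin omega_finite_omega_lin)
    then show ?case using e bA insert by (simp add: algebra_simps)
  qed
qed

lemma homR_omega_free_shift: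
  assumes "omega_free f" "\<And>k. k \<in> Poly_Mapping.keys f \<Longrightarrow> bideg (fst k, I) = (d1, d2)"
  shows "homR (d1 + 2 * int (\<Sum>I), 0) f"
  unfolding homR_def
proof
  fix k assume k: "k \<in> Poly_Mapping.keys f"
  then have "snd k = {}" using assms(1) by (auto simp: omega_free_def)
  then show "bideg k = (d1 + 2 * int (\<Sum>I), 0)" using assms(2)[OF k] by (simp add: bideg_eq)
qed

lemma omega_in_Rn: "f \<in> Rn n \<Longrightarrow> omega_in n f" by (simp add: Rn_def omega_in_def)

lemma Rn_S0set_expansion:
  assumes "f \<in> Rn n"
  shows "\<exists>c. (\<forall>I. omega_free (c I) \<and> c I \<in> Rn n) \<and> f = (\<Sum>I\<in>Pow {1..n}. mulR (c I) (S0set n I))"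
proof -
  obtain c where c: "\<forall>I. omega_free (c I)" "f = (\<Sum>I\<in>Pow {1..n}. mulR (c I) (S0set n I))"
    using in_span_omega_in[OF omega_in_Rn[OF assms]] by (auto simp: in_span_def)
  have "f = restrict_vars n f" using restrict_vars_id[OF assms] by simp
  also have "\<dots> = (\<Sum>I\<in>Pow {1..n}. mulR (restrict_vars n (c I)) (S0set n I))"
    unfolding c(2) by (simp add: restrict_vars_sum restrict_vars_mulR restrict_vars_id Rn_S0set)
  finally show ?thesis
    using c(1) by (intro exI[of _ "\<lambda>I. restrict_vars n (c I)"]) (simp add: restrict_vars_omega_free restrict_vars_Rn)
qed

lemma S0set_expansion_invariant_coeffs:
  assumes c: "\<And>I. omega_free (c I)" and f: "f = (\<Sum>I\<in>Pow {1..n}. mulR (c I) (S0set n I))"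
    and a: "1 \<le> a" "a < n" and inv: "act a f = f"
  shows "\<forall>I\<in>Pow {1..n}. act a (c I) = c I"
proof -
  have "act a f = (\<Sum>I\<in>Pow {1..n}. mulR (act a (c I)) (S0set n I))"
    unfolding f act_sum[OF finite_Pow_atLeastAtMost]
    by (intro sum.cong refl) (simp add: act_mulR omega_finite_omega_free c omega_finite_S0set act_S0set[OF a])
  then have "(\<Sum>I\<in>Pow {1..n}. mulR (act a (c I) - c I) (S0set n I)) = 0"
    using inv f by (simp add: mulR_diff_left sum_subtractf)
  then have "\<forall>I\<in>Pow {1..n}. act a (c I) - c I = 0"
    by (rule S0set_independent[rotated]) (simp add: omega_free_diff act_omega_free c)
  then show ?thesis by simp
qed

lemma Tcar_coeff:
  assumes "c \<in> Tcar n" "I \<subseteq> {1..n}"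
  shows "omega_free (c I)" "c I \<in> Rn n" "\<And>a. a \<in> {1..<n} \<Longrightarrow> act a (c I) = c I"
proof -
  have s: "c I \<in> symP n" using assms by (simp add: Tcar_def)
  then show "omega_free (c I)" unfolding symP_def omega_free_def by blast
  show "c I \<in> Rn n" using s by (simp add: symP_def Rinv_def)
  show "\<And>a. a \<in> {1..<n} \<Longrightarrow> act a (c I) = c I" using s by (simp add: symP_def Rinv_def)
qed

lemma Tcar_coeff_outside: "c \<in> Tcar n \<Longrightarrow> \<not> I \<subseteq> {1..n} \<Longrightarrow> c I = 0"
  by (simp add: Tcar_def)

lemma Phi_add: "Phi n (\<lambda>I. c I + d I) = Phi n c + Phi n d"
  by (simp add: Phi_def mulR_add_left sum.distrib)

lemma Phi_diff: "Phi n (\<lambda>I. c I - d I) = Phi n c - Phi n d"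
  by (simp add: Phi_def mulR_diff_left sum_subtractf)

lemma Phi_tone: "Phi n tone = oneR"
proof -
  have "Phi n tone = mulR (tone {}) (S0set n {})"
    unfolding Phi_def by (rule sum_eq_single) (auto simp: tone_def)
  then show ?thesis by (simp add: tone_def S0set_def)
qed

lemma Phi_Rinv:
  assumes "c \<in> Tcar n"
  shows "Phi n c \<in> Rinv n"
proof -
  have Rn: "Phi n c \<in> Rn n"
    unfolding Phi_def using Tcar_coeff[OF assms] by (auto intro!: Rn_sum Rn_mulR Rn_S0set)
  have "act a (Phi n c) = Phi n c" if a: "a \<in> {1..<n}" for a
    unfolding Phi_def act_sum[OF finite_Pow_atLeastAtMost]
  proof (intro sum.cong refl)
    fix I assume I: "I \<in> Pow {1..n}"
    show "act a (mulR (c I) (S0set n I)) = mulR (c I) (S0set n I)"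
      using Tcar_coeff[OF assms] I a
      by (simp add: act_mulR omega_finite_omega_free omega_finite_S0set act_S0set)
  qed
  then show ?thesis using Rn by (simp add: Rinv_def)
qed

lemma Phi_inj: "inj_on (Phi n) (Tcar n)"
proof (rule inj_onI)
  fix c d assume c: "c \<in> Tcar n" and d: "d \<in> Tcar n" and e: "Phi n c = Phi n d"
  have "(\<Sum>I\<in>Pow {1..n}. mulR (c I - d I) (S0set n I)) = 0"
    using e Phi_diff[of n c d] by (simp add: Phi_def)
  then have "\<forall>I\<in>Pow {1..n}. c I - d I = 0"
    by (rule S0set_independent[rotated]) (use Tcar_coeff(1)[OF c] Tcar_coeff(1)[OF d] in \<open>auto intro: omega_free_diff\<close>)
  then show "c = d"
    using Tcar_coeff_outside[OF c] Tcar_coeff_outside[OF d] by (intro ext) (metis PowI eq_iff_diff_eq_0)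
qed

lemma Phi_surj:
  assumes f: "f \<in> Rinv n"
  shows "f \<in> Phi n ` Tcar n"
proof -
  have fR: "f \<in> Rn n" and fi: "\<And>a. a \<in> {1..<n} \<Longrightarrow> act a f = f" using f by (auto simp: Rinv_def)
  obtain c where c: "\<forall>I. omega_free (c I) \<and> c I \<in> Rn n" "f = (\<Sum>I\<in>Pow {1..n}. mulR (c I) (S0set n I))"
    using Rn_S0set_expansion[OF fR] by blast
  have ci: "act a (c I) = c I" if "a \<in> {1..<n}" "I \<in> Pow {1..n}" for a I
    using S0set_expansion_invariant_coeffs[of c f n a] c fi that by auto
  define c' where "c' I = (if I \<subseteq> {1..n} then c I else 0)" for I
  have "c' \<in> Tcar n"
    unfolding Tcar_def symP_def Rinv_def
    using c(1) ci by (auto simp: c'_def omega_free_def)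
  moreover have "Phi n c' = f"
    unfolding Phi_def c(2) by (intro sum.cong refl) (simp add: c'_def)
  ultimately show ?thesis by blast
qed

lemma mulR_S0set_terms:
  assumes c: "omega_free (c I)" and d: "omega_free (d J)" and I: "I \<subseteq> {1..n}" and J: "J \<subseteq> {1..n}"
  shows "mulR (mulR (c I) (S0set n I)) (mulR (d J) (S0set n J)) =
    (if I \<inter> J = {} then frag_cmul (sgnpair I J) (mulR (mulR (c I) (d J)) (S0set n (I \<union> J))) else 0)"
proof -
  have fs: "omega_finite (c I)" "omega_finite (d J)" "omega_finite (S0set n I)" "omega_finite (S0set n J)"
    using c d omega_finite_S0set[OF I] omega_finite_S0set[OF J] by (auto intro: omega_finite_omega_free)
  have "mulR (mulR (c I) (S0set n I)) (mulR (d J) (S0set n J))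
      = mulR (c I) (mulR (S0set n I) (mulR (d J) (S0set n J)))"
    using fs by (simp add: mulR_assoc omega_finite_mulR)
  also have "\<dots> = mulR (mulR (c I) (d J)) (mulR (S0set n I) (S0set n J))"
    using fs d by (simp add: mulR_left_commute_omega_free mulR_assoc omega_finite_mulR)
  finally show ?thesis by (simp add: S0set_mult[OF I J] mulR_cmul_right)
qed

lemma Phi_tmul:
  assumes c: "c \<in> Tcar n" and d: "d \<in> Tcar n"
  shows "Phi n (tmul n c d) = mulR (Phi n c) (Phi n d)"
proof -
  let ?P = "Pow {1..n}"
  define G where "G I J = frag_cmul (sgnpair I J) (mulR (mulR (c I) (d J)) (S0set n (I \<union> J)))" for I J
  have "mulR (tmul n c d K) (S0set n K)
      = (\<Sum>(I, J)\<in>{(I, J). I \<subseteq> {1..n} \<and> J \<subseteq> {1..n} \<and> I \<inter> J = {} \<and> I \<union> J = K}. G I J)" for K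
  proof -
    have "finite {(I, J). I \<subseteq> {1..n} \<and> J \<subseteq> {1..n} \<and> I \<inter> J = {} \<and> I \<union> J = K}"
      by (rule finite_subset[of _ "?P \<times> ?P"]) auto
    then show ?thesis
      unfolding tmul_def by (simp add: mulR_sum_left mulR_single_scalar mulR_cmul_left G_def case_prod_unfold)
  qed
  then have "Phi n (tmul n c d) = (\<Sum>(I, J)\<in>?P \<times> ?P. if I \<inter> J = {} then G I J else 0)"
    unfolding Phi_def by (simp add: sum_Pow_pairs_by_union)
  also have "\<dots> = (\<Sum>I\<in>?P. \<Sum>J\<in>?P. mulR (mulR (c I) (S0set n I)) (mulR (d J) (S0set n J)))"
    unfolding sum.cartesian_product[symmetric] G_def
    using Tcar_coeff(1)[OF c] Tcar_coeff(1)[OF d] by (intro sum.cong refl) (simp add: mulR_S0set_terms)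
  also have "\<dots> = mulR (Phi n c) (Phi n d)"
    unfolding Phi_def mulR_sum_left[OF finite_Pow_atLeastAtMost]
    unfolding mulR_sum_right[OF finite_Pow_atLeastAtMost] ..
  finally show ?thesis .
qed

lemma Phi_hom:
  assumes c: "c \<in> Tcar n" and h: "homT (d1, d2) c"
  shows "homR (d1, d2) (Phi n c)"
  unfolding Phi_def
proof (rule homR_sum)
  fix I assume I: "I \<in> Pow {1..n}"
  have ev: "omega_free (c I)" using Tcar_coeff(1)[OF c] I by auto
  have deg: "\<And>k. k \<in> Poly_Mapping.keys (c I) \<Longrightarrow> bideg (fst k, I) = (d1, d2)"
    using h by (auto simp: homT_def)
  show "homR (d1, d2) (mulR (c I) (S0set n I))"
  proof (cases "c I = 0")
    case False
    then obtain k0 where "k0 \<in> Poly_Mapping.keys (c I)" by (metis all_not_in_conv keys_eq_empty)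
    then have "d2 = 2 * int (card I)" using deg[of k0] by (simp add: bideg_eq)
    moreover have "homR (d1 + 2 * int (\<Sum>I) + - 2 * int (\<Sum>I), 0 + 2 * int (card I)) (mulR (c I) (S0set n I))"
      using I ev deg by (intro homR_mulR homR_omega_free_shift homR_S0set omega_finite_omega_free
          omega_finite_S0set) auto
    ultimately show ?thesis by simp
  qed simp
qed

theorem corollary2p2:
  fixes n :: nat
  shows "bij_betw (Phi n) (Tcar n) (Rinv n)
    \<and> Phi n tone = oneR
    \<and> (\<forall>c \<in> Tcar n. \<forall>d \<in> Tcar n. Phi n (\<lambda>I. c I + d I) = Phi n c + Phi n d)
    \<and> (\<forall>c \<in> Tcar n. \<forall>d \<in> Tcar n. Phi n (tmul n c d) = mulR (Phi n c) (Phi n d))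
    \<and> (\<forall>c \<in> Tcar n. \<forall>deg. homT deg c \<longrightarrow> homR deg (Phi n c))"
proof (intro conjI ballI allI impI)
  show "bij_betw (Phi n) (Tcar n) (Rinv n)"
    unfolding bij_betw_def using Phi_inj Phi_Rinv Phi_surj by blast
  show "Phi n tone = oneR" by (rule Phi_tone)
  show "\<And>c d. Phi n (\<lambda>I. c I + d I) = Phi n c + Phi n d" by (rule Phi_add)
  show "\<And>c d. c \<in> Tcar n \<Longrightarrow> d \<in> Tcar n \<Longrightarrow> Phi n (tmul n c d) = mulR (Phi n c) (Phi n d)" by (rule Phi_tmul)
  show "\<And>c deg. c \<in> Tcar n \<Longrightarrow> homT deg c \<Longrightarrow> homR deg (Phi n c)"
    using Phi_hom by (metis surj_pair)
qed

end
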